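(* Let $g\ge 1$, $0\le i\le g$, and let $s$ be a positive integer such that $16$ divides $2^i s$. Let $\Phi$ be the Siegel $\Phi$-operator. Then: (1) if $0<i<g$, $\Phi(S_{i,s}^g)=2^{i+1}S_{i,s}^{g-1}+S_{i-1,2s}^{g-1}$; (2) if $i=g$, $\Phi(S_{g,s}^g)=S_{g-1,2s}^{g-1}$; (3) if $i=0$, $\Phi(S_{0,s}^g)=2\,S_{0,s}^{g-1}$.
   Context: A characteristic in genus $g$ is $m=[\varepsilon,\delta]\in\mathbb{F}_2^{2g}$ with $\varepsilon,\delta\in\mathbb{F}_2^g$; it is even if $\varepsilon\cdot\delta=0\in\mathbb{F}_2$. For $\tau\in\mathcal{H}_g$ (Siegel upper half space), $\theta_m(\tau)=\sum_{n\in\mathbb{Z}^g}\exp\big(\pi i\,[(n+\varepsilon/2)^t\tau(n+\varepsilon/2)+2(n+\varepsilon/2)^t\delta/2]\big)$, with $\varepsilon,\delta$ regarded as $0/1$ integer vectors. For $m=[\varepsilon,\delta]$, $n=[\varepsilon_1,\delta_1]$ put $e(m,n)=(-1)^{\varepsilon\cdot\delta_1+\varepsilon_1\cdot\delta}$. A subspace $V\subset\mathbb{F}_2^{2g}$ is isotropic if $e(m,n)=1$ for all $m,n\in V$; a coset $V+m$ is even if all its elements are even. For a finite set $C$ of characteristics, $P(C)=\prod_{n\in C}\theta_n$. For $0\le i\le g$ and a positive integer $s$, $S_{i,s}^g=\sum_{V+m}P(V+m)^s$, summed over all distinct even cosets $V+m$ of all $i$-dimensional isotropic subspaces $V\subset\mathbb{F}_2^{2g}$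 (for $i=0$ these are single even characteristics). In genus $0$ the only characteristic is the empty one, with $\theta=1$, so $S_{0,s}^0=1$. The Siegel operator is $\Phi(f)(\tau_1)=\lim_{\lambda\to+\infty}f\begin{pmatrix}\tau_1&0\\0&i\lambda\end{pmatrix}$ for $\tau_1\in\mathcal{H}_{g-1}$ (for $g=1$, $\Phi(f)=\lim_{\lambda\to+\infty}f(i\lambda)$). *)

theory Defs
  imports "HOL-Analysis.Analysis"
begin

text \<open>Genus-g objects are represented with explicit carriers indexed by nat:
  a g x g complex matrix is a function nat => nat => complex vanishing outside {..<g}^2,
  a vector of F_2^g is a function nat => bool vanishing outside {..<g}.\<close>

type_synonym cmat = "nat \<Rightarrow> nat \<Rightarrow> complex"
type_synonym char = "(nat \<Rightarrow> bool) \<times> (nat \<Rightarrow> bool)"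

definition siegel_H :: "nat \<Rightarrow> cmat set" where
  "siegel_H g = {\<tau>. (\<forall>j k. (g \<le> j \<or> g \<le> k) \<longrightarrow> \<tau> j k = 0)
      \<and> (\<forall>j k. \<tau> j k = \<tau> k j)
      \<and> (\<forall>x :: nat \<Rightarrow> real. (\<exists>j<g. x j \<noteq> 0) \<longrightarrow>
           (\<Sum>j<g. \<Sum>k<g. x j * Im (\<tau> j k) * x k) > 0)}"

definition chars :: "nat \<Rightarrow> char set" where
  "chars g = {(e, d). \<forall>j. g \<le> j \<longrightarrow> \<not> e j \<and> \<not> d j}"

definition czero :: char where
  "czero = (\<lambda>_. False, \<lambda>_. False)"

definition cadd :: "char \<Rightarrow> char \<Rightarrow> char" where
  "cadd m n = (\<lambda>j. fst m j \<noteq> fst n j, \<lambda>j. snd m j \<noteq> snd n j)"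

definition dotF2 :: "nat \<Rightarrow> (nat \<Rightarrow> bool) \<Rightarrow> (nat \<Rightarrow> bool) \<Rightarrow> bool" where
  "dotF2 g a b = odd (card {j. j < g \<and> a j \<and> b j})"

definition even_char :: "nat \<Rightarrow> char \<Rightarrow> bool" where
  "even_char g m = (\<not> dotF2 g (fst m) (snd m))"

definition e_one :: "nat \<Rightarrow> char \<Rightarrow> char \<Rightarrow> bool" where
  "e_one g m n = (dotF2 g (fst m) (snd n) = dotF2 g (fst n) (snd m))"

definition isotropic_subspace :: "nat \<Rightarrow> char set \<Rightarrow> bool" where
  "isotropic_subspace g V = (V \<subseteq> chars g \<and> czero \<in> V
      \<and> (\<forall>m\<in>V. \<forall>n\<in>V. cadd m n \<in> V)
      \<and> (\<forall>m\<in>V. \<forall>n\<in>V. e_one g m n))"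

text \<open>An F_2-subspace has dimension i iff it has 2^i elements.\<close>
definition even_cosets :: "nat \<Rightarrow> nat \<Rightarrow> char set set" where
  "even_cosets g i = {C. \<exists>V m. isotropic_subspace g V \<and> card V = 2 ^ i \<and> m \<in> chars g
      \<and> C = (\<lambda>v. cadd v m) ` V \<and> (\<forall>c\<in>C. even_char g c)}"

definition Zg :: "nat \<Rightarrow> (nat \<Rightarrow> int) set" where
  "Zg g = {n. \<forall>j. g \<le> j \<longrightarrow> n j = 0}"

definition theta :: "nat \<Rightarrow> char \<Rightarrow> cmat \<Rightarrow> complex" where
  "theta g m \<tau> = (\<Sum>\<^sub>\<infinity> n \<in> Zg g.
     (let x = (\<lambda>j. of_int (n j) + (if fst m j then 1/2 else 0) :: real) in
      exp (complex_of_real pi * \<i> *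
        ((\<Sum>j<g. \<Sum>k<g. complex_of_real (x j) * \<tau> j k * complex_of_real (x k))
         + (\<Sum>j<g. complex_of_real (x j * (if snd m j then 1 else 0)))))))"

definition Ssum :: "nat \<Rightarrow> nat \<Rightarrow> nat \<Rightarrow> cmat \<Rightarrow> complex" where
  "Ssum g i s \<tau> = (\<Sum>C\<in>even_cosets g i. (\<Prod>n\<in>C. theta g n \<tau>) ^ s)"

definition blk :: "nat \<Rightarrow> cmat \<Rightarrow> real \<Rightarrow> cmat" where
  "blk g \<tau>1 t = (\<lambda>j k. if j < g - 1 \<and> k < g - 1 then \<tau>1 j k
      else if j = g - 1 \<and> k = g - 1 then \<i> * complex_of_real t else 0)"

definition siegel_Phi_eq :: "nat \<Rightarrow> (cmat \<Rightarrow> complex) \<Rightarrow> (cmat \<Rightarrow> complex) \<Rightarrow> bool" where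
  "siegel_Phi_eq g f F = (\<forall>\<tau>1\<in>siegel_H (g - 1). ((\<lambda>t. f (blk g \<tau>1 t)) \<longlongrightarrow> F \<tau>1) at_top)"

end

theory Submission
  imports Defs "HOL-Real_Asymp.Real_Asymp"
begin

text \<open>For \<open>\<tau> = diag(\<tau>\<^sub>1, i\<lambda>)\<close> the theta series factorises as
  \<open>\<theta>\<^sub>m(\<tau>) = \<theta>\<^sub>m\<^sub>'(\<tau>\<^sub>1) \<cdot> \<theta>\<^sub>[\<^sub>\<epsilon>\<^sub>,\<^sub>\<delta>\<^sub>](i\<lambda>)\<close>, where \<open>m'\<close> forgets the last coordinate \<open>[\<epsilon>, \<delta>]\<close> of
  \<open>m\<close>, and the genus-one factor tends to \<open>1\<close> if \<open>\<epsilon> = 0\<close> and to \<open>0\<close> if \<open>\<epsilon> = 1\<close>. So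
  \<open>\<Phi>(S\<^sup>g\<^sub>i\<^sub>,\<^sub>s)\<close> only sees the even cosets whose elements all have \<open>\<epsilon> = 0\<close>, with each
  characteristic replaced by its truncation. Truncation maps such a coset either injectively onto
  an \<open>i\<close>-dimensional even coset of genus \<open>g - 1\<close>, each of which has exactly \<open>2\<^sup>i\<^sup>+\<^sup>1\<close> such
  lifts (a linear form on the subspace and a constant), or two-to-one onto an
  \<open>(i - 1)\<close>-dimensional one, each of which has exactly one such lift and contributes its product
  squared. For \<open>i = g\<close> there are no injective lifts, as isotropic subspaces of genus \<open>g - 1\<close>
  have at most \<open>2\<^sup>g\<^sup>-\<^sup>1\<close> elements, and for \<open>i = 0\<close> there are no two-to-one ones.

  The factorisation is formal, so no hypothesis on \<open>\<tau>\<^sub>1\<close> is needed: an infinite sum that does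
  not exist is \<open>0\<close> on both sides.\<close>

declare split_paired_All [simp del] split_paired_Ex [simp del]

lemma cadd_assoc: "cadd (cadd a b) c = cadd a (cadd b c)"
  by (auto simp: cadd_def fun_eq_iff)

lemma cadd_left_commute: "cadd a (cadd b c) = cadd b (cadd a c)"
  by (auto simp: cadd_def fun_eq_iff)

lemma cadd_self [simp]: "cadd a a = czero"
  by (auto simp: cadd_def czero_def fun_eq_iff)

lemma cadd_czero [simp]: "cadd a czero = a" "cadd czero a = a"
  by (auto simp: cadd_def czero_def fun_eq_iff)

lemma cadd_cancel_left [simp]: "cadd a (cadd a b) = b"
  by (cases b) (auto simp: cadd_def fun_eq_iff)

lemma cadd_cancel_right [simp]: "cadd (cadd b a) a = b"
  by (cases b) (auto simp: cadd_def fun_eq_iff)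

lemma cadd_left_inj [simp]: "cadd a b = cadd a c \<longleftrightarrow> b = c"
  and cadd_right_inj [simp]: "cadd b a = cadd c a \<longleftrightarrow> b = c"
  by (metis cadd_cancel_left, metis cadd_cancel_right)

lemma cadd_translate_both [simp]: "cadd (cadd v m) (cadd w m) = cadd v w"
  by (auto simp: cadd_def fun_eq_iff)

lemma fst_cadd: "fst (cadd a b) j = (fst a j \<noteq> fst b j)"
  and snd_cadd: "snd (cadd a b) j = (snd a j \<noteq> snd b j)"
  by (simp_all add: cadd_def)

lemma chars_iff: "m \<in> chars g \<longleftrightarrow> (\<forall>j. g \<le> j \<longrightarrow> \<not> fst m j \<and> \<not> snd m j)"
  by (cases m) (simp add: chars_def)

lemma cadd_chars: "m \<in> chars g \<Longrightarrow> n \<in> chars g \<Longrightarrow> cadd m n \<in> chars g"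
  by (simp add: chars_iff fst_cadd snd_cadd)

lemma chars_Suc: "n \<in> chars h \<Longrightarrow> n \<in> chars (Suc h)"
  by (simp add: chars_iff)

lemma finite_chars: "finite (chars g)"
proof -
  let ?ind = "\<lambda>(A, B). (\<lambda>j. j \<in> A, \<lambda>j. j \<in> B) :: char"
  have "chars g \<subseteq> ?ind ` (Pow {..<g} \<times> Pow {..<g})"
  proof
    fix m assume "m \<in> chars g"
    then have "m = ?ind ({j. j < g \<and> fst m j}, {j. j < g \<and> snd m j})"
      by (cases m) (auto simp: chars_iff fun_eq_iff; meson leI)
    then show "m \<in> ?ind ` (Pow {..<g} \<times> Pow {..<g})" by blast
  qed
  then show ?thesis by (rule finite_subset) auto
qed

lemma dotF2_Suc: "dotF2 (Suc h) a b = (dotF2 h a b \<noteq> (a h \<and> b h))"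
proof -
  have "{j. j < Suc h \<and> a j \<and> b j} = {j. j < h \<and> a j \<and> b j} \<union> (if a h \<and> b h then {h} else {})"
    by (auto simp: less_Suc_eq)
  then show ?thesis unfolding dotF2_def by (auto simp: card_insert_if)
qed

lemma dotF2_cong:
  "(\<And>j. j < g \<Longrightarrow> a j = a' j) \<Longrightarrow> (\<And>j. j < g \<Longrightarrow> b j = b' j) \<Longrightarrow> dotF2 g a b = dotF2 g a' b'"
  unfolding dotF2_def by (rule arg_cong[where f = "\<lambda>S. odd (card S)"]) auto

lemma dotF2_0 [simp]: "dotF2 0 a b = False"
  by (simp add: dotF2_def)

lemma dotF2_False [simp]: "dotF2 g (\<lambda>_. False) b = False" "dotF2 g b (\<lambda>_. False) = False"
  by (simp_all add: dotF2_def)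

lemma dotF2_add_left: "dotF2 g (\<lambda>j. a j \<noteq> a' j) b = (dotF2 g a b \<noteq> dotF2 g a' b)"
  and dotF2_add_right: "dotF2 g b (\<lambda>j. a j \<noteq> a' j) = (dotF2 g b a \<noteq> dotF2 g b a')"
  by (induction g) (auto simp: dotF2_Suc simp del: dotF2_False)

lemma dotF2_last: "dotF2 (Suc h) (\<lambda>j. j = h) b = b h" "dotF2 (Suc h) b (\<lambda>j. j = h) = b h"
proof -
  have "{j. j < Suc h \<and> j = h \<and> b j} = (if b h then {h} else {})"
    "{j. j < Suc h \<and> b j \<and> j = h} = (if b h then {h} else {})" by auto
  then show "dotF2 (Suc h) (\<lambda>j. j = h) b = b h" "dotF2 (Suc h) b (\<lambda>j. j = h) = b h"
    by (simp_all add: dotF2_def)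
qed

lemma dotF2_cadd:
  "dotF2 g (fst (cadd a b)) x = (dotF2 g (fst a) x \<noteq> dotF2 g (fst b) x)"
  "dotF2 g x (snd (cadd a b)) = (dotF2 g x (snd a) \<noteq> dotF2 g x (snd b))"
  unfolding cadd_def fst_conv snd_conv by (rule dotF2_add_left, rule dotF2_add_right)

lemma e_one_commute: "e_one g m n = e_one g n m"
  by (auto simp: e_one_def)

lemma e_one_self [simp]: "e_one g m m"
  by (simp add: e_one_def)

lemma e_one_cadd_left: "e_one g (cadd a b) n = (e_one g a n = e_one g b n)"
  unfolding e_one_def dotF2_cadd by auto

lemma e_one_cadd_right: "e_one g n (cadd a b) = (e_one g n a = e_one g n b)"
  using e_one_cadd_left e_one_commute by metis

definition char_subgroup :: "char set \<Rightarrow> bool" where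
  "char_subgroup V \<longleftrightarrow> czero \<in> V \<and> (\<forall>a\<in>V. \<forall>b\<in>V. cadd a b \<in> V)"

abbreviation char_coset :: "char set \<Rightarrow> char \<Rightarrow> char set" where
  "char_coset V m \<equiv> (\<lambda>v. cadd v m) ` V"

text \<open>Linear forms \<open>V \<rightarrow> \<bbbF>\<^sub>2\<close>, normalised to \<open>False\<close> off \<open>V\<close> so that they are determined by
  their values on \<open>V\<close>.\<close>

definition linear_forms :: "char set \<Rightarrow> (char \<Rightarrow> bool) set" where
  "linear_forms V = {\<phi>. (\<forall>v\<in>V. \<forall>w\<in>V. \<phi> (cadd v w) = (\<phi> v \<noteq> \<phi> w)) \<and> (\<forall>x. x \<notin> V \<longrightarrow> \<not> \<phi> x)}"

lemma char_subgroupD: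
  "char_subgroup V \<Longrightarrow> czero \<in> V" "char_subgroup V \<Longrightarrow> a \<in> V \<Longrightarrow> b \<in> V \<Longrightarrow> cadd a b \<in> V"
  by (simp_all add: char_subgroup_def)

lemma isotropic_subspace_iff:
  "isotropic_subspace g V \<longleftrightarrow> V \<subseteq> chars g \<and> char_subgroup V \<and> (\<forall>m\<in>V. \<forall>n\<in>V. e_one g m n)"
  by (auto simp: isotropic_subspace_def char_subgroup_def)

lemma isotropic_finite: "isotropic_subspace g V \<Longrightarrow> finite V"
  using finite_chars finite_subset by (auto simp: isotropic_subspace_def)

lemma card_translate_union:
  assumes "finite K" "K \<inter> cadd a ` K = {}"
  shows "card (K \<union> cadd a ` K) = 2 * card K"
proof -
  have "card (cadd a ` K) = card K" by (rule card_image) (auto intro: inj_onI)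
  then show ?thesis using assms by (simp add: card_Un_disjoint)
qed

lemma kernel_subgroup:
  assumes "char_subgroup V" "\<And>a b. a \<in> V \<Longrightarrow> b \<in> V \<Longrightarrow> \<kappa> (cadd a b) = (\<kappa> a \<noteq> \<kappa> b)"
  shows "char_subgroup {v \<in> V. \<not> \<kappa> v}"
  using assms assms(2)[of czero czero] by (auto simp: char_subgroup_def)

lemma subgroup_kernel_split:
  assumes V: "char_subgroup V" and "v0 \<in> V" "\<kappa> v0"
    and \<kappa>: "\<And>a b. a \<in> V \<Longrightarrow> b \<in> V \<Longrightarrow> \<kappa> (cadd a b) = (\<kappa> a \<noteq> \<kappa> b)"
  defines "K \<equiv> {v \<in> V. \<not> \<kappa> v}"
  shows "V = K \<union> cadd v0 ` K" and "K \<inter> cadd v0 ` K = {}"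
proof -
  have "v \<in> K \<union> cadd v0 ` K" if "v \<in> V" for v
  proof (cases "\<kappa> v")
    case True
    then have "cadd v0 v \<in> K" using assms that by (simp add: K_def char_subgroupD)
    then show ?thesis by (metis UnI2 cadd_cancel_left image_eqI)
  qed (use that K_def in blast)
  then show "V = K \<union> cadd v0 ` K" using assms by (auto simp: K_def char_subgroupD)
  have False if "b \<in> K" "cadd v0 b \<in> K" for b
    using that \<kappa>[of v0 b] \<open>v0 \<in> V\<close> \<open>\<kappa> v0\<close> by (simp add: K_def)
  then show "K \<inter> cadd v0 ` K = {}" by blast
qed

lemma card_le_twice_kernel:
  assumes "finite V" "char_subgroup V"
    and "\<And>a b. a \<in> V \<Longrightarrow> b \<in> V \<Longrightarrow> \<kappa> (cadd a b) = (\<kappa> a \<noteq> \<kappa> b)"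
  shows "card V \<le> 2 * card {v \<in> V. \<not> \<kappa> v}"
proof (cases "\<exists>v0\<in>V. \<kappa> v0")
  case True
  then obtain v0 where "v0 \<in> V" "\<kappa> v0" by blast
  note split = subgroup_kernel_split[OF assms(2) this assms(3)]
  have "card V = 2 * card {v \<in> V. \<not> \<kappa> v}"
    using card_translate_union[OF _ split(2)] split(1) assms(1) by simp
  then show ?thesis by simp
next
  case False
  then have "{v \<in> V. \<not> \<kappa> v} = V" by blast
  then show ?thesis by simp
qed

lemma coset_base: "czero \<in> V \<Longrightarrow> m \<in> char_coset V m"
  by (metis cadd_czero(2) image_eqI)

lemma coset_diff: "char_subgroup V \<Longrightarrow> a \<in> char_coset V m \<Longrightarrow> b \<in> char_coset V m \<Longrightarrow> cadd a b \<in> V"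
  by (auto simp: char_subgroupD)

lemma coset_add: "char_subgroup V \<Longrightarrow> a \<in> char_coset V m \<Longrightarrow> v \<in> V \<Longrightarrow> cadd a v \<in> char_coset V m"
proof -
  assume V: "char_subgroup V" and a: "a \<in> char_coset V m" and v: "v \<in> V"
  from a obtain u where "u \<in> V" "a = cadd u m" by blast
  moreover have "cadd a v = cadd (cadd u v) m" if "a = cadd u m"
    using that by (auto simp: cadd_def fun_eq_iff)
  ultimately show ?thesis using V v by (auto simp: char_subgroupD)
qed

lemma linear_form_czero: "\<phi> \<in> linear_forms V \<Longrightarrow> czero \<in> V \<Longrightarrow> \<not> \<phi> czero"
  unfolding linear_forms_def using cadd_self[of czero] by fastforce

lemma exists_coordinate_form:
  assumes "v \<noteq> czero"
  obtains \<kappa> :: "char \<Rightarrow> bool" where "\<And>x y. \<kappa> (cadd x y) = (\<kappa> x \<noteq> \<kappa> y)" "\<kappa> v"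
proof -
  from assms obtain j where "fst v j \<or> snd v j" by (cases v) (auto simp: czero_def fun_eq_iff)
  then show ?thesis
  proof
    assume "fst v j"
    then show ?thesis using that[of "\<lambda>x. fst x j"] by (simp add: fst_cadd)
  next
    assume "snd v j"
    then show ?thesis using that[of "\<lambda>x. snd x j"] by (simp add: snd_cadd)
  qed
qed

text \<open>The inverse evaluates a form on the kernel at the projection \<open>proj\<close> of the argument onto
  the kernel along \<open>v0\<close>.\<close>

lemma linear_forms_split_bij:
  assumes V: "char_subgroup V" and v0: "v0 \<in> V" "\<kappa> v0"
    and \<kappa>: "\<And>x y. \<kappa> (cadd x y) = (\<kappa> x \<noteq> \<kappa> y)"
  defines "K \<equiv> {v \<in> V. \<not> \<kappa> v}"
  shows "bij_betw (\<lambda>\<phi>. (\<lambda>x. x \<in> K \<and> \<phi> x, \<phi> v0)) (linear_forms V) (linear_forms K \<times> UNIV)"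
proof -
  define proj where "proj x = (if \<kappa> x then cadd v0 x else x)" for x
  have K: "char_subgroup K" unfolding K_def using V \<kappa> by (rule kernel_subgroup)
  have proj_K: "proj x \<in> K" if "x \<in> V" for x
    using that V v0 \<kappa> by (auto simp: proj_def K_def char_subgroupD)
  have proj_add: "proj (cadd x y) = cadd (proj x) (proj y)" for x y
    using v0 \<kappa>[of x y] by (auto simp: proj_def cadd_assoc cadd_left_commute[of v0])
  define G where "G p x = (x \<in> V \<and> (fst p (proj x) \<noteq> (snd p \<and> \<kappa> x)))"
    for p :: "(char \<Rightarrow> bool) \<times> bool" and x
  show ?thesis
  proof (rule bij_betw_byWitness[where f' = G])
    show "\<forall>\<phi>\<in>linear_forms V. G (\<lambda>x. x \<in> K \<and> \<phi> x, \<phi> v0) = \<phi>"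
    proof (intro ballI ext)
      fix \<phi> x assume \<phi>: "\<phi> \<in> linear_forms V"
      show "G (\<lambda>x. x \<in> K \<and> \<phi> x, \<phi> v0) x = \<phi> x"
      proof (cases "x \<in> V")
        case True
        have "\<phi> (proj x) = (\<phi> x \<noteq> (\<phi> v0 \<and> \<kappa> x))"
          using \<phi> v0 True by (auto simp: proj_def linear_forms_def)
        then show ?thesis using True proj_K[OF True] unfolding G_def by auto
      qed (use \<phi> in \<open>simp add: G_def linear_forms_def\<close>)
    qed
    show "\<forall>p\<in>linear_forms K \<times> UNIV. (\<lambda>x. x \<in> K \<and> G p x, G p v0) = p"
    proof
      fix p assume p: "p \<in> linear_forms K \<times> (UNIV :: bool set)"
      then have "fst p \<in> linear_forms K" by auto
      then have "(\<lambda>x. x \<in> K \<and> G p x) = fst p" "\<not> fst p czero"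
        using linear_form_czero char_subgroupD(1)[OF K]
        by (auto simp: G_def proj_def K_def linear_forms_def)
      then show "(\<lambda>x. x \<in> K \<and> G p x, G p v0) = p" using v0 by (simp add: G_def proj_def)
    qed
    show "(\<lambda>\<phi>. (\<lambda>x. x \<in> K \<and> \<phi> x, \<phi> v0)) ` linear_forms V \<subseteq> linear_forms K \<times> UNIV"
      using char_subgroupD(2)[OF K] by (auto simp: linear_forms_def K_def)
    show "G ` (linear_forms K \<times> UNIV) \<subseteq> linear_forms V"
    proof
      fix q assume "q \<in> G ` (linear_forms K \<times> UNIV)"
      then obtain \<psi> c where \<psi>: "\<psi> \<in> linear_forms K" and q: "q = G (\<psi>, c)" by auto
      have "\<psi> (proj (cadd v w)) = (\<psi> (proj v) \<noteq> \<psi> (proj w))" if "v \<in> V" "w \<in> V" for v w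
        using \<psi> proj_K that by (simp add: proj_add linear_forms_def)
      then have "q (cadd v w) = (q v \<noteq> q w)" if "v \<in> V" "w \<in> V" for v w
        using that V \<kappa>[of v w] by (auto simp: q G_def char_subgroupD)
      then show "q \<in> linear_forms V" by (simp add: linear_forms_def q G_def)
    qed
  qed
qed

lemma card_linear_forms:
  "finite V \<Longrightarrow> char_subgroup V \<Longrightarrow> card (linear_forms V) = card V"
proof (induction "card V" arbitrary: V rule: less_induct)
  case less
  show ?case
  proof (cases "V = {czero}")
    case True
    have "\<phi> = (\<lambda>_. False)" if "\<phi> \<in> linear_forms V" for \<phi>
    proof
      fix x show "\<phi> x = False"
        using that linear_form_czero[OF that] True unfolding linear_forms_def
        by (cases "x = czero") blast+
    qed
    then have "linear_forms V = {\<lambda>_. False}" by (auto simp: linear_forms_def)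
    then show ?thesis using True by simp
  next
    case False
    then obtain v0 where v0: "v0 \<in> V" "v0 \<noteq> czero"
      using char_subgroupD(1)[OF less.prems(2)] by blast
    obtain \<kappa> where \<kappa>: "\<And>x y. \<kappa> (cadd x y) = (\<kappa> x \<noteq> \<kappa> y)" "\<kappa> v0"
      using exists_coordinate_form[OF v0(2)] by blast
    define K where "K = {v \<in> V. \<not> \<kappa> v}"
    note split = subgroup_kernel_split[OF less.prems(2) v0(1) \<kappa>(2) \<kappa>(1), folded K_def]
    have fK: "finite K" using less.prems(1) by (simp add: K_def)
    have cV: "card V = 2 * card K" using split card_translate_union[OF fK] by simp
    have "card K < card V" using cV v0 split(1) by (cases "card K = 0") (use fK in auto)
    then have IH: "card (linear_forms K) = card K"
      using less.hyps fK kernel_subgroup[OF less.prems(2) \<kappa>(1)] by (simp add: K_def)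
    have "card (linear_forms V) = card (linear_forms K \<times> (UNIV :: bool set))"
      using linear_forms_split_bij[OF less.prems(2) v0(1) \<kappa>(2) \<kappa>(1)]
      by (simp add: K_def bij_betw_same_card)
    then show ?thesis using IH cV by (simp add: card_cartesian_product)
  qed
qed

section \<open>Truncation of the last coordinate\<close>

text \<open>In genus \<open>Suc h\<close> the last coordinate has index \<open>h\<close>; \<open>char_trunc h\<close> clears it, which maps
  \<open>chars (Suc h)\<close> onto \<open>chars h\<close>.\<close>

definition char_trunc :: "nat \<Rightarrow> char \<Rightarrow> char" where
  "char_trunc h n = ((fst n)(h := False), (snd n)(h := False))"

definition eps_unit :: "nat \<Rightarrow> char" where
  "eps_unit h = (\<lambda>j. j = h, \<lambda>_. False)"

definition delta_unit :: "nat \<Rightarrow> char" where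
  "delta_unit h = (\<lambda>_. False, \<lambda>j. j = h)"

definition set_delta :: "nat \<Rightarrow> char \<Rightarrow> bool \<Rightarrow> char" where
  "set_delta h n c = (fst n, (snd n)(h := c))"

lemma char_trunc_cadd: "char_trunc h (cadd a b) = cadd (char_trunc h a) (char_trunc h b)"
  by (auto simp: char_trunc_def cadd_def fun_eq_iff)

lemma char_trunc_czero [simp]: "char_trunc h czero = czero"
  by (auto simp: char_trunc_def czero_def fun_eq_iff)

lemma char_trunc_last [simp]: "\<not> fst (char_trunc h n) h" "\<not> snd (char_trunc h n) h"
  by (simp_all add: char_trunc_def)

lemma char_trunc_chars: "n \<in> chars (Suc h) \<Longrightarrow> char_trunc h n \<in> chars h"
  by (auto simp: char_trunc_def chars_iff)

lemma char_trunc_id: "n \<in> chars h \<Longrightarrow> char_trunc h n = n"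
  by (cases n) (auto simp: char_trunc_def chars_iff fun_eq_iff)

lemma chars_last: "n \<in> chars h \<Longrightarrow> \<not> fst n h \<and> \<not> snd n h"
  by (simp add: chars_iff)

lemma set_delta_char_trunc: "\<not> fst n h \<Longrightarrow> set_delta h (char_trunc h n) (snd n h) = n"
  by (cases n) (auto simp: char_trunc_def set_delta_def fun_eq_iff)

lemma char_trunc_set_delta: "n \<in> chars h \<Longrightarrow> char_trunc h (set_delta h n c) = n"
  by (cases n) (auto simp: char_trunc_def set_delta_def chars_iff fun_eq_iff)

lemma char_trunc_inject:
  assumes "char_trunc h a = char_trunc h b" "fst a h = fst b h" "snd a h = snd b h"
  shows "a = b"
proof -
  have eq: "(fst a)(h := False) = (fst b)(h := False)" "(snd a)(h := False) = (snd b)(h := False)"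
    using assms(1) by (simp_all add: char_trunc_def)
  have "fst a j = fst b j \<and> snd a j = snd b j" for j
  proof (cases "j = h")
    case False
    then show ?thesis using fun_cong[OF eq(1), of j] fun_cong[OF eq(2), of j] by simp
  qed (use assms in simp)
  then show ?thesis by (simp add: prod_eq_iff fun_eq_iff)
qed

lemma cadd_set_delta: "cadd (set_delta h a c) (set_delta h b d) = set_delta h (cadd a b) (c \<noteq> d)"
  by (auto simp: cadd_def set_delta_def fun_eq_iff)

lemma fst_set_delta [simp]: "fst (set_delta h n c) = fst n"
  and snd_set_delta [simp]: "snd (set_delta h n c) h = c"
  by (simp_all add: set_delta_def)

lemma cadd_delta_unit_set_delta: "cadd (set_delta h n c) (delta_unit h) = set_delta h n (\<not> c)"
  by (auto simp: cadd_def set_delta_def delta_unit_def fun_eq_iff)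

lemma set_delta_chars: "n \<in> chars h \<Longrightarrow> set_delta h n c \<in> chars (Suc h)"
  by (auto simp: chars_iff set_delta_def)

lemma set_delta_czero: "set_delta h czero False = czero"
  by (auto simp: set_delta_def czero_def fun_eq_iff)

lemma char_trunc_delta_unit [simp]: "char_trunc h (delta_unit h) = czero"
  by (auto simp: char_trunc_def delta_unit_def czero_def fun_eq_iff)

lemma delta_unit_chars: "delta_unit h \<in> chars (Suc h)"
  by (auto simp: delta_unit_def chars_iff)

lemma fst_delta_unit [simp]: "\<not> fst (delta_unit h) j" and snd_delta_unit [simp]: "snd (delta_unit h) h"
  by (simp_all add: delta_unit_def)

lemma delta_unit_neq_czero: "delta_unit h \<noteq> czero"
  unfolding delta_unit_def czero_def by (metis snd_conv)

lemma e_one_eps_unit: "e_one (Suc h) (eps_unit h) w \<longleftrightarrow> \<not> snd w h"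
  by (simp add: e_one_def eps_unit_def dotF2_last)

lemma e_one_delta_unit: "\<not> fst v h \<Longrightarrow> e_one (Suc h) (delta_unit h) v"
  by (simp add: e_one_def delta_unit_def dotF2_last)

lemma dotF2_fun_upd: "dotF2 h a (b(h := c)) = dotF2 h a b" "dotF2 h (b(h := c)) a = dotF2 h b a"
  by (rule dotF2_cong; simp)+

lemma e_one_char_trunc:
  assumes "\<not> snd a h \<or> \<not> fst b h" "\<not> snd b h \<or> \<not> fst a h"
  shows "e_one h (char_trunc h a) (char_trunc h b) = e_one (Suc h) a b"
  using assms by (auto simp: e_one_def char_trunc_def dotF2_Suc dotF2_fun_upd)

lemma even_char_trunc: "\<not> fst n h \<Longrightarrow> even_char (Suc h) n = even_char h (char_trunc h n)"
  by (simp add: even_char_def dotF2_Suc char_trunc_def dotF2_fun_upd)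

section \<open>Size of isotropic subspaces\<close>

lemma isotropic_char_trunc:
  assumes V: "isotropic_subspace (Suc h) V"
    and last: "\<And>a b. a \<in> V \<Longrightarrow> b \<in> V \<Longrightarrow> \<not> snd a h \<or> \<not> fst b h"
  shows "isotropic_subspace h (char_trunc h ` V)"
  unfolding isotropic_subspace_def
proof (intro conjI ballI)
  note V' = V[unfolded isotropic_subspace_def]
  show "char_trunc h ` V \<subseteq> chars h" using V' char_trunc_chars by blast
  show "czero \<in> char_trunc h ` V" using V' by (metis image_eqI char_trunc_czero)
  fix x y assume "x \<in> char_trunc h ` V" "y \<in> char_trunc h ` V"
  then obtain a b where ab: "a \<in> V" "b \<in> V" "x = char_trunc h a" "y = char_trunc h b" by blast
  show "cadd x y \<in> char_trunc h ` V" using ab V' by (metis image_eqI char_trunc_cadd)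
  show "e_one h x y" using ab V' e_one_char_trunc[OF last last] by simp
qed

lemma card_le_twice_char_trunc:
  assumes "finite W" "\<forall>w\<in>W. \<not> snd w h"
  shows "card W \<le> 2 * card (char_trunc h ` W)"
proof -
  have "w \<in> char_trunc h ` W \<union> cadd (eps_unit h) ` char_trunc h ` W" if "w \<in> W" for w
  proof (cases "fst w h")
    case True
    then have "w = cadd (eps_unit h) (char_trunc h w)" using assms(2) that
      by (cases w) (auto simp: char_trunc_def eps_unit_def cadd_def fun_eq_iff)
    then show ?thesis using that by blast
  next
    case False
    then have "w = char_trunc h w" using assms(2) that
      by (cases w) (auto simp: char_trunc_def fun_eq_iff)
    then show ?thesis using that by blast
  qed
  then have "card W \<le> card (char_trunc h ` W \<union> cadd (eps_unit h) ` char_trunc h ` W)"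
    by (intro card_mono) (use assms(1) in auto)
  also have "\<dots> \<le> card (char_trunc h ` W) + card (cadd (eps_unit h) ` char_trunc h ` W)"
    by (rule card_Un_le)
  also have "card (cadd (eps_unit h) ` char_trunc h ` W) \<le> card (char_trunc h ` W)"
    by (rule card_image_le) (use assms(1) in simp)
  then have "card (char_trunc h ` W) + card (cadd (eps_unit h) ` char_trunc h ` W)
      \<le> 2 * card (char_trunc h ` W)" by simp
  finally show ?thesis .
qed

text \<open>Induction on the genus: the elements with \<open>\<delta>\<^sub>h = 0\<close> form a subspace of index at most 2,
  and truncation maps it onto an isotropic subspace of genus \<open>h\<close>, at most 2-to-1. Both losses
  cannot occur together: if truncation is not injective, then \<open>eps_unit h \<in> V\<close>, and
  orthogonality to \<open>eps_unit h\<close> forces \<open>\<delta>\<^sub>h = 0\<close> on all of \<open>V\<close>.\<close>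

lemma card_isotropic_le: "isotropic_subspace g V \<Longrightarrow> card V \<le> 2 ^ g"
proof (induction g arbitrary: V)
  case 0
  have "m = czero" if "m \<in> chars 0" for m
    using that by (cases m) (simp add: chars_iff czero_def fun_eq_iff)
  then have "V \<subseteq> {czero}" using 0 by (auto simp: isotropic_subspace_def)
  then show ?case using card_mono[of "{czero}" V] by simp
next
  case (Suc h)
  note V = Suc.prems[unfolded isotropic_subspace_iff]
  have fV: "finite V" using Suc.prems by (rule isotropic_finite)
  define K where "K = {v \<in> V. \<not> snd v h}"
  have fK: "finite K" using fV by (simp add: K_def)
  have snd_add: "snd (cadd a b) h = (snd a h \<noteq> snd b h)" for a b by (simp add: snd_cadd)
  have "char_subgroup K" unfolding K_def using V snd_add by (intro kernel_subgroup) auto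
  then have "isotropic_subspace (Suc h) K" using V by (auto simp: isotropic_subspace_iff K_def)
  then have "isotropic_subspace h (char_trunc h ` K)" by (rule isotropic_char_trunc) (simp add: K_def)
  then have trK: "card (char_trunc h ` K) \<le> 2 ^ h" by (rule Suc.IH)
  show ?case
  proof (cases "eps_unit h \<in> V")
    case True
    then have "K = V" using V e_one_eps_unit unfolding K_def by blast
    have "card K \<le> 2 * card (char_trunc h ` K)"
      by (rule card_le_twice_char_trunc[OF fK]) (simp add: K_def)
    then show ?thesis using trK \<open>K = V\<close> by simp
  next
    case False
    have "a = b" if "a \<in> K" "b \<in> K" "char_trunc h a = char_trunc h b" for a b
    proof (rule ccontr)
      assume "a \<noteq> b"
      have "cadd a b \<in> V" using that V by (auto simp: K_def char_subgroupD)
      moreover have "cadd a b = eps_unit h" if "fst a h \<noteq> fst b h"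
        using \<open>char_trunc h a = char_trunc h b\<close> \<open>a \<in> K\<close> \<open>b \<in> K\<close> that
        by (auto simp: K_def char_trunc_def eps_unit_def cadd_def fun_eq_iff) metis+
      ultimately show False
        using False \<open>a \<noteq> b\<close> char_trunc_inject[of h a b] that
        by (cases "fst a h = fst b h") (auto simp: K_def)
    qed
    then have "card (char_trunc h ` K) = card K" by (intro card_image inj_onI)
    moreover have "card V \<le> 2 * card K"
      unfolding K_def using fV V snd_add by (intro card_le_twice_kernel) auto
    ultimately show ?thesis using trK by simp
  qed
qed

lemma even_cosets_empty: "h < i \<Longrightarrow> even_cosets h i = {}"
proof -
  assume "h < i"
  have False if "isotropic_subspace h V" "card V = 2 ^ i" for V
    using card_isotropic_le[OF that(1)] that(2) power_strict_increasing[OF \<open>h < i\<close>, of "2::nat"]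
    by simp
  then show ?thesis unfolding even_cosets_def by blast
qed

section \<open>Even cosets under truncation\<close>

lemma even_cosetsE:
  assumes "C \<in> even_cosets g i"
  obtains V m where "isotropic_subspace g V" "card V = 2 ^ i" "m \<in> chars g"
    "C = char_coset V m" "\<forall>c\<in>C. even_char g c"
  using assms unfolding even_cosets_def by blast

lemma even_cosetsI:
  assumes "isotropic_subspace g V" "card V = 2 ^ i" "m \<in> chars g" "\<forall>c\<in>char_coset V m. even_char g c"
  shows "char_coset V m \<in> even_cosets g i"
  unfolding even_cosets_def using assms by blast

lemma finite_even_cosets: "finite (even_cosets g i)"
proof -
  have "even_cosets g i \<subseteq> Pow (chars g)"
    using cadd_chars by (fastforce simp: isotropic_subspace_def elim!: even_cosetsE)
  then show ?thesis using finite_chars by (meson finite_Pow_iff finite_subset)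
qed

lemma finite_even_coset: "C \<in> even_cosets g i \<Longrightarrow> finite C"
  using isotropic_finite by (auto elim!: even_cosetsE)

definition eps_free_cosets :: "nat \<Rightarrow> nat \<Rightarrow> char set set" where
  "eps_free_cosets h i = {C \<in> even_cosets (Suc h) i. \<forall>n\<in>C. \<not> fst n h}"

definition trunc_inj_cosets :: "nat \<Rightarrow> nat \<Rightarrow> char set set" where
  "trunc_inj_cosets h i = {C \<in> eps_free_cosets h i. inj_on (char_trunc h) C}"

definition trunc_noninj_cosets :: "nat \<Rightarrow> nat \<Rightarrow> char set set" where
  "trunc_noninj_cosets h i = {C \<in> eps_free_cosets h i. \<not> inj_on (char_trunc h) C}"

lemma eps_free_cosetsE:
  assumes "C \<in> eps_free_cosets h i"
  obtains V m where "isotropic_subspace (Suc h) V" "card V = 2 ^ i" "m \<in> chars (Suc h)"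
    "C = char_coset V m" "\<forall>c\<in>C. even_char (Suc h) c" "\<forall>c\<in>C. \<not> fst c h" "\<forall>v\<in>V. \<not> fst v h"
proof -
  from assms obtain V m where V: "isotropic_subspace (Suc h) V" "card V = 2 ^ i" "m \<in> chars (Suc h)"
    "C = char_coset V m" "\<forall>c\<in>C. even_char (Suc h) c" and C: "\<forall>c\<in>C. \<not> fst c h"
    unfolding eps_free_cosets_def by (auto elim!: even_cosetsE)
  have "\<not> fst m h" using C coset_base V(1,4) by (auto simp: isotropic_subspace_def)
  then have "\<forall>v\<in>V. \<not> fst v h" using C V(4) by (auto simp: fst_cadd)
  with V C show ?thesis by (rule that)
qed

lemma char_trunc_coset:
  assumes "isotropic_subspace (Suc h) V" "m \<in> chars (Suc h)" "\<forall>c\<in>char_coset V m. even_char (Suc h) c"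
    "\<forall>c\<in>char_coset V m. \<not> fst c h" "\<forall>v\<in>V. \<not> fst v h" "card (char_trunc h ` V) = 2 ^ k"
  shows "char_trunc h ` char_coset V m = char_coset (char_trunc h ` V) (char_trunc h m)"
    and "char_trunc h ` char_coset V m \<in> even_cosets h k"
proof -
  show eq: "char_trunc h ` char_coset V m = char_coset (char_trunc h ` V) (char_trunc h m)"
    by (simp add: image_image char_trunc_cadd)
  have "isotropic_subspace h (char_trunc h ` V)"
    by (rule isotropic_char_trunc[OF assms(1)]) (use assms(5) in blast)
  moreover have "\<forall>c\<in>char_trunc h ` char_coset V m. even_char h c"
    using assms(3,4) even_char_trunc by blast
  ultimately show "char_trunc h ` char_coset V m \<in> even_cosets h k"
    unfolding eq using assms(6) char_trunc_chars[OF assms(2)] by (intro even_cosetsI) auto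
qed

lemma trunc_inj_coset_image: "C \<in> trunc_inj_cosets h i \<Longrightarrow> char_trunc h ` C \<in> even_cosets h i"
proof -
  assume C: "C \<in> trunc_inj_cosets h i"
  then obtain V m where V: "isotropic_subspace (Suc h) V" "card V = 2 ^ i" "m \<in> chars (Suc h)"
    "C = char_coset V m" "\<forall>c\<in>C. even_char (Suc h) c" "\<forall>c\<in>C. \<not> fst c h" "\<forall>v\<in>V. \<not> fst v h"
    by (auto simp: trunc_inj_cosets_def elim!: eps_free_cosetsE)
  have "inj_on (char_trunc h) C" using C by (simp add: trunc_inj_cosets_def)
  then have "inj_on (char_trunc h) V"
    by (auto simp: V(4) inj_on_def char_trunc_cadd)
  then have "card (char_trunc h ` V) = 2 ^ i" using V(2) by (simp add: card_image)
  then show ?thesis using char_trunc_coset(2)[OF V(1,3) _ _ V(7)] V(4-6) by blast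
qed

lemma delta_unit_in_noninj_coset:
  assumes C: "C \<in> trunc_noninj_cosets h i" and V: "isotropic_subspace (Suc h) V" "C = char_coset V m"
    and eps: "\<forall>c\<in>C. \<not> fst c h"
  shows "delta_unit h \<in> V"
proof -
  from C obtain a b where ab: "a \<in> C" "b \<in> C" "a \<noteq> b" "char_trunc h a = char_trunc h b"
    by (auto simp: trunc_noninj_cosets_def inj_on_def)
  have "\<not> fst a h" "\<not> fst b h" using eps ab(1,2) by auto
  have "snd a h \<noteq> snd b h"
  proof
    assume "snd a h = snd b h"
    then have "a = b" using char_trunc_inject[OF ab(4)] \<open>\<not> fst a h\<close> \<open>\<not> fst b h\<close> by simp
    then show False using ab(3) by contradiction
  qed
  have "cadd a b = delta_unit h"
  proof (rule char_trunc_inject[of h])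
    show "char_trunc h (cadd a b) = char_trunc h (delta_unit h)" using ab(4) by (simp add: char_trunc_cadd)
    show "fst (cadd a b) h = fst (delta_unit h) h" using \<open>\<not> fst a h\<close> \<open>\<not> fst b h\<close> by (simp add: fst_cadd)
    show "snd (cadd a b) h = snd (delta_unit h) h" using \<open>snd a h \<noteq> snd b h\<close> by (simp add: snd_cadd)
  qed
  moreover have "char_subgroup V" using V(1) by (simp add: isotropic_subspace_iff)
  ultimately show ?thesis using coset_diff[of V a m b] ab(1,2) V(2) by simp
qed

lemma trunc_noninj_cosetD:
  assumes C: "C \<in> trunc_noninj_cosets h i"
  shows "0 < i" and "char_trunc h ` C \<in> even_cosets h (i - 1)"
    and "\<And>c. c \<in> C \<Longrightarrow> cadd c (delta_unit h) \<in> C" and "\<forall>c\<in>C. \<not> fst c h"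
proof -
  obtain V m where V: "isotropic_subspace (Suc h) V" "card V = 2 ^ i" "m \<in> chars (Suc h)"
    "C = char_coset V m" "\<forall>c\<in>C. even_char (Suc h) c" "\<forall>c\<in>C. \<not> fst c h" "\<forall>v\<in>V. \<not> fst v h"
    using C by (auto simp: trunc_noninj_cosets_def elim!: eps_free_cosetsE)
  show "\<forall>c\<in>C. \<not> fst c h" using V(6) .
  have sub: "char_subgroup V" using V(1) by (simp add: isotropic_subspace_iff)
  have \<delta>: "delta_unit h \<in> V" using delta_unit_in_noninj_coset[OF C V(1,4,6)] .
  show "cadd c (delta_unit h) \<in> C" if "c \<in> C" for c using coset_add[OF sub _ \<delta>] that V(4) by blast
  define W where "W = {v \<in> V. \<not> snd v h}"
  note split = subgroup_kernel_split[OF sub \<delta>, of "\<lambda>v. snd v h", folded W_def]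
  have "finite W" using isotropic_finite[OF V(1)] by (simp add: W_def)
  then have cV: "card V = 2 * card W" using split by (simp add: snd_cadd card_translate_union)
  then have "0 < i" using V(2) by (cases i) simp_all
  then show "0 < i" .
  have "char_trunc h ` V = char_trunc h ` W"
    using split by (simp add: snd_cadd image_Un image_image char_trunc_cadd)
  moreover have "inj_on (char_trunc h) W"
  proof (rule inj_onI)
    fix v w assume "v \<in> W" "w \<in> W" "char_trunc h v = char_trunc h w"
    then show "v = w" using V(7) char_trunc_inject[of h v w] by (simp add: W_def)
  qed
  ultimately have "card (char_trunc h ` V) = 2 ^ (i - 1)"
    using cV V(2) \<open>0 < i\<close> by (simp add: card_image power_eq_if)
  then show "char_trunc h ` C \<in> even_cosets h (i - 1)"
    using char_trunc_coset(2)[OF V(1,3) _ _ V(7)] V(4-6) by blast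
qed

lemma noninj_coset_fiber:
  assumes C: "C \<in> trunc_noninj_cosets h i" and x: "x \<in> char_trunc h ` C"
  shows "{n \<in> C. char_trunc h n = x} = {set_delta h x False, set_delta h x True}"
proof -
  have eps: "\<forall>c\<in>C. \<not> fst c h" using trunc_noninj_cosetD(4)[OF C] .
  have "C \<subseteq> chars (Suc h)"
    using C cadd_chars by (fastforce simp: trunc_noninj_cosets_def eps_free_cosets_def
        isotropic_subspace_def elim!: even_cosetsE)
  then have xh: "x \<in> chars h" using x char_trunc_chars by blast
  have "set_delta h x c \<in> C" for c
  proof -
    obtain a where a: "a \<in> C" "char_trunc h a = x" using x by blast
    have "set_delta h x (snd a h) = a" using a eps set_delta_char_trunc by blast
    moreover from this have "set_delta h x (\<not> snd a h) = cadd a (delta_unit h)"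
      by (metis cadd_delta_unit_set_delta)
    ultimately show ?thesis using a(1) trunc_noninj_cosetD(3)[OF C a(1)]
      by (cases "c = snd a h") simp_all
  qed
  show ?thesis
  proof (intro equalityI subsetI)
    fix n assume "n \<in> {n \<in> C. char_trunc h n = x}"
    then have "n = set_delta h x (snd n h)" using eps set_delta_char_trunc[of n h] by simp
    then show "n \<in> {set_delta h x False, set_delta h x True}" by (cases "snd n h") simp_all
  next
    fix n assume "n \<in> {set_delta h x False, set_delta h x True}"
    then show "n \<in> {n \<in> C. char_trunc h n = x}"
      using \<open>\<And>c. set_delta h x c \<in> C\<close> char_trunc_set_delta[OF xh] by blast
  qed
qed

lemma prod_noninj_coset:
  fixes f :: "char \<Rightarrow> 'a::comm_semiring_1"
  assumes C: "C \<in> trunc_noninj_cosets h i"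
  shows "(\<Prod>n\<in>C. f (char_trunc h n)) = (\<Prod>x\<in>char_trunc h ` C. f x) ^ 2"
proof -
  have fC: "finite C"
    using C by (auto simp: trunc_noninj_cosets_def eps_free_cosets_def intro: finite_even_coset)
  have "(\<Prod>n\<in>C. f (char_trunc h n))
      = (\<Prod>x\<in>char_trunc h ` C. \<Prod>n\<in>{n \<in> C. char_trunc h n = x}. f (char_trunc h n))"
    by (rule prod.group[symmetric]) (simp_all add: fC)
  also have "\<dots> = (\<Prod>x\<in>char_trunc h ` C. f x ^ 2)"
  proof (rule prod.cong)
    fix x assume "x \<in> char_trunc h ` C"
    note fiber = noninj_coset_fiber[OF C this]
    have "set_delta h x False \<noteq> set_delta h x True"
      using snd_set_delta[of h x False] snd_set_delta[of h x True] by metis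
    then show "(\<Prod>n\<in>{n \<in> C. char_trunc h n = x}. f (char_trunc h n)) = f x ^ 2"
      by (subst prod.cong[OF refl, where h = "\<lambda>_. f x"]) (use fiber in \<open>auto simp: power2_eq_square\<close>)
  qed simp
  also have "\<dots> = (\<Prod>x\<in>char_trunc h ` C. f x) ^ 2" by (rule prod_power_distrib[symmetric])
  finally show ?thesis .
qed

lemma noninj_coset_eq:
  assumes "C \<in> trunc_noninj_cosets h i"
  shows "C = {n. \<not> fst n h \<and> char_trunc h n \<in> char_trunc h ` C}"
proof (intro equalityI subsetI)
  fix n assume "n \<in> C"
  then show "n \<in> {n. \<not> fst n h \<and> char_trunc h n \<in> char_trunc h ` C}"
    using trunc_noninj_cosetD(4)[OF assms] by blast
next
  fix n assume n: "n \<in> {n. \<not> fst n h \<and> char_trunc h n \<in> char_trunc h ` C}"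
  then have "n = set_delta h (char_trunc h n) (snd n h)" using set_delta_char_trunc by simp
  also have "\<dots> \<in> {c \<in> C. char_trunc h c = char_trunc h n}"
    using noninj_coset_fiber[OF assms, of "char_trunc h n"] n by (cases "snd n h") auto
  finally show "n \<in> C" by simp
qed

lemma noninj_coset_lift:
  assumes i: "0 < i" and C': "C' \<in> even_cosets h (i - 1)"
  shows "\<exists>C\<in>trunc_noninj_cosets h i. char_trunc h ` C = C'"
proof -
  obtain V' m where V': "isotropic_subspace h V'" "card V' = 2 ^ (i - 1)" "m \<in> chars h"
    "C' = char_coset V' m" "\<forall>c\<in>C'. even_char h c"
    using C' by (rule even_cosetsE)
  have V'h: "V' \<subseteq> chars h" and sub: "char_subgroup V'" and iso: "\<forall>a\<in>V'. \<forall>b\<in>V'. e_one h a b"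
    using V'(1) by (simp_all add: isotropic_subspace_iff)
  have last: "\<not> fst v h \<and> \<not> snd v h" "char_trunc h v = v" if "v \<in> V'" for v
    using V'h that chars_last char_trunc_id by blast+
  have mh: "\<not> fst m h" "\<not> snd m h" "char_trunc h m = m" using V'(3) chars_last char_trunc_id by blast+
  define V where "V = V' \<union> cadd (delta_unit h) ` V'"
  define C where "C = char_coset V m"
  have e: "e_one (Suc h) a b" "e_one (Suc h) (delta_unit h) a" "e_one (Suc h) a (delta_unit h)"
    if "a \<in> V'" "b \<in> V'" for a b
  proof -
    show "e_one (Suc h) a b" using e_one_char_trunc[of a h b] iso that last by simp
    show "e_one (Suc h) (delta_unit h) a" using e_one_delta_unit last(1)[OF that(1)] by simp
    then show "e_one (Suc h) a (delta_unit h)" by (simp add: e_one_commute)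
  qed
  have iso: "isotropic_subspace (Suc h) V"
    unfolding isotropic_subspace_iff char_subgroup_def
  proof (intro conjI ballI)
    have "cadd (delta_unit h) v \<in> chars (Suc h)" if "v \<in> V'" for v
      using cadd_chars[OF delta_unit_chars chars_Suc] V'h that by blast
    then show "V \<subseteq> chars (Suc h)" using V'h chars_Suc by (auto simp: V_def)
    show "czero \<in> V" using sub by (simp add: V_def char_subgroupD)
    fix x y assume "x \<in> V" "y \<in> V"
    then obtain a b where ab: "a \<in> V'" "b \<in> V'"
      "x = a \<or> x = cadd (delta_unit h) a" "y = b \<or> y = cadd (delta_unit h) b"
      unfolding V_def by blast
    have "cadd a b \<in> V'" using sub ab by (simp add: char_subgroupD)
    with ab(3,4) show "cadd x y \<in> V"
      by (auto simp: V_def cadd_assoc cadd_left_commute[of _ "delta_unit h"])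
    from ab(3,4) show "e_one (Suc h) x y" using e[OF ab(1,2)] e[OF ab(1,1)] e[OF ab(2,2)]
      by (auto simp: e_one_cadd_left e_one_cadd_right)
  qed
  have card: "card V = 2 ^ i"
  proof -
    have False if "a \<in> V'" "cadd (delta_unit h) a \<in> V'" for a
      using last(1)[OF that(1)] last(1)[OF that(2)] by (simp add: snd_cadd)
    then have "V' \<inter> cadd (delta_unit h) ` V' = {}" by blast
    then have "card V = 2 * card V'"
      using card_translate_union isotropic_finite[OF V'(1)] by (simp add: V_def)
    then show ?thesis using V'(2) i by (simp add: power_eq_if)
  qed
  have "char_trunc h ` V' = (\<lambda>v. v) ` V'" by (rule image_cong) (simp_all add: last)
  then have trV': "char_trunc h ` V' = V'" by simp
  have "char_trunc h ` cadd (delta_unit h) ` V' = char_trunc h ` V'"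
    by (simp add: image_image char_trunc_cadd)
  then have trV: "char_trunc h ` V = V'" by (simp add: V_def image_Un trV')
  have "char_trunc h ` C = (\<lambda>v. cadd v m) ` (char_trunc h ` V)"
    by (simp add: C_def image_image char_trunc_cadd mh(3))
  then have trunc: "char_trunc h ` C = C'" by (simp add: trV V'(4))
  have eps: "\<forall>c\<in>C. \<not> fst c h"
  proof
    fix c assume "c \<in> C"
    then obtain a where "a \<in> V'" "c = cadd a m \<or> c = cadd (cadd (delta_unit h) a) m"
      unfolding C_def V_def by blast
    then show "\<not> fst c h" using last(1) mh(1) by (elim disjE) (simp_all add: fst_cadd)
  qed
  have "\<forall>c\<in>C. even_char (Suc h) c"
    using eps trunc V'(5) even_char_trunc by blast
  then have "C \<in> eps_free_cosets h i"
    unfolding eps_free_cosets_def C_def using even_cosetsI[OF iso card chars_Suc[OF V'(3)]] eps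
    by (simp add: C_def)
  moreover have "\<not> inj_on (char_trunc h) C"
  proof
    assume inj: "inj_on (char_trunc h) C"
    have "czero \<in> V" "delta_unit h \<in> V"
      using char_subgroupD(1)[OF sub] by (auto simp: V_def intro: image_eqI[of _ _ czero])
    then have "m \<in> C" "cadd (delta_unit h) m \<in> C" by (auto simp: C_def intro: coset_base)
    moreover have "char_trunc h (cadd (delta_unit h) m) = char_trunc h m" by (simp add: char_trunc_cadd)
    ultimately have "cadd (delta_unit h) m = cadd czero m" using inj_onD[OF inj] by simp
    then have "delta_unit h = czero" by (simp only: cadd_right_inj)
    then show False using delta_unit_neq_czero by contradiction
  qed
  ultimately show ?thesis using trunc by (auto simp: trunc_noninj_cosets_def)
qed

lemma trunc_noninj_cosets_bij:
  "0 < i \<Longrightarrow> bij_betw ((`) (char_trunc h)) (trunc_noninj_cosets h i) (even_cosets h (i - 1))"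
proof (unfold bij_betw_def, intro conjI inj_onI)
  fix C1 C2 assume "C1 \<in> trunc_noninj_cosets h i" "C2 \<in> trunc_noninj_cosets h i"
    and "char_trunc h ` C1 = char_trunc h ` C2"
  then show "C1 = C2" using noninj_coset_eq[of C1 h i] noninj_coset_eq[of C2 h i] by simp
next
  assume "0 < i"
  show "(`) (char_trunc h) ` trunc_noninj_cosets h i = even_cosets h (i - 1)"
  proof (intro equalityI subsetI)
    fix C' assume "C' \<in> (`) (char_trunc h) ` trunc_noninj_cosets h i"
    then show "C' \<in> even_cosets h (i - 1)" using trunc_noninj_cosetD(2) by blast
  next
    fix C' assume "C' \<in> even_cosets h (i - 1)"
    then show "C' \<in> (`) (char_trunc h) ` trunc_noninj_cosets h i"
      using noninj_coset_lift[OF \<open>0 < i\<close>] by blast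
  qed
qed

text \<open>A lift of \<open>C' = V' + p\<close> on which truncation is injective is the graph of an affine
  function \<open>C' \<rightarrow> \<bbbF>\<^sub>2\<close> giving \<open>\<delta>\<^sub>h\<close>; \<open>\<phi>\<close> is its linear part and \<open>b\<close> its value at \<open>p\<close>.\<close>

definition coset_lift :: "nat \<Rightarrow> char set \<Rightarrow> char \<Rightarrow> (char \<Rightarrow> bool) \<Rightarrow> bool \<Rightarrow> char set" where
  "coset_lift h V p \<phi> b = (\<lambda>v. set_delta h (cadd v p) (\<phi> v \<noteq> b)) ` V"

lemma coset_lift_trunc_inj:
  assumes V': "isotropic_subspace h V'" "card V' = 2 ^ i" "p \<in> chars h"
    "\<forall>c\<in>char_coset V' p. even_char h c"
    and \<phi>: "\<phi> \<in> linear_forms V'"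
  shows "coset_lift h V' p \<phi> b \<in> trunc_inj_cosets h i"
    and "char_trunc h ` coset_lift h V' p \<phi> b = char_coset V' p"
proof -
  have V'h: "V' \<subseteq> chars h" and sub: "char_subgroup V'" and iso: "\<forall>a\<in>V'. \<forall>b\<in>V'. e_one h a b"
    using V'(1) by (simp_all add: isotropic_subspace_iff)
  have vp: "cadd v p \<in> chars h" if "v \<in> V'" for v using V'h that V'(3) cadd_chars by blast
  have trunc_lift: "char_trunc h (set_delta h (cadd v p) c) = cadd v p" if "v \<in> V'" for v c
    using char_trunc_set_delta[OF vp[OF that]] .
  define V where "V = (\<lambda>v. set_delta h v (\<phi> v)) ` V'"
  have lift_eq: "coset_lift h V' p \<phi> b = char_coset V (set_delta h p b)"
    by (simp add: coset_lift_def V_def image_image cadd_set_delta)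
  have trunc_V: "char_trunc h (set_delta h v (\<phi> v)) = v" if "v \<in> V'" for v
    using char_trunc_set_delta V'h that by blast
  have "isotropic_subspace (Suc h) V"
    unfolding isotropic_subspace_iff char_subgroup_def
  proof (intro conjI ballI)
    show "V \<subseteq> chars (Suc h)" using V'h set_delta_chars by (auto simp: V_def)
    have "set_delta h czero (\<phi> czero) = czero"
      using char_subgroupD(1)[OF sub] linear_form_czero[OF \<phi>] set_delta_czero by simp
    then show "czero \<in> V" using char_subgroupD(1)[OF sub] unfolding V_def by (metis image_eqI)
    fix x y assume "x \<in> V" "y \<in> V"
    then obtain v w where vw: "v \<in> V'" "w \<in> V'" "x = set_delta h v (\<phi> v)" "y = set_delta h w (\<phi> w)"
      unfolding V_def by blast
    have "cadd x y = set_delta h (cadd v w) (\<phi> (cadd v w))"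
      using vw \<phi> by (simp add: cadd_set_delta linear_forms_def)
    then show "cadd x y \<in> V" using sub vw by (auto simp: V_def char_subgroupD)
    have "\<not> fst v h" "\<not> fst w h" using vw(1,2) V'h chars_last by blast+
    then have "e_one h (char_trunc h x) (char_trunc h y) = e_one (Suc h) x y"
      using vw(3,4) e_one_char_trunc[of x h y] by simp
    then show "e_one (Suc h) x y" using trunc_V vw iso by simp
  qed
  moreover have "card V = 2 ^ i"
  proof -
    have "inj_on (\<lambda>v. set_delta h v (\<phi> v)) V'" by (rule inj_on_inverseI[of _ "char_trunc h"]) (rule trunc_V)
    then show ?thesis using V'(2) by (simp add: V_def card_image)
  qed
  moreover have elt: "\<not> fst n h \<and> char_trunc h n \<in> char_coset V' p \<and> even_char (Suc h) n"
    if n: "n \<in> coset_lift h V' p \<phi> b" for n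
  proof -
    obtain v where v: "v \<in> V'" "n = set_delta h (cadd v p) (\<phi> v \<noteq> b)"
      using n unfolding coset_lift_def by blast
    then have "\<not> fst n h" using vp chars_last by simp
    moreover have "char_trunc h n = cadd v p" using v trunc_lift by simp
    ultimately show ?thesis using v(1) V'(4) even_char_trunc[of n h] by auto
  qed
  ultimately have "coset_lift h V' p \<phi> b \<in> eps_free_cosets h i"
    using even_cosetsI[of "Suc h" V i "set_delta h p b"] set_delta_chars[OF V'(3)]
    by (simp add: eps_free_cosets_def flip: lift_eq)
  moreover have "inj_on (char_trunc h) (coset_lift h V' p \<phi> b)"
  proof (rule inj_onI)
    fix x y assume "x \<in> coset_lift h V' p \<phi> b" "y \<in> coset_lift h V' p \<phi> b"
      and eq: "char_trunc h x = char_trunc h y"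
    then obtain v w where "v \<in> V'" "w \<in> V'" "x = set_delta h (cadd v p) (\<phi> v \<noteq> b)"
      "y = set_delta h (cadd w p) (\<phi> w \<noteq> b)" unfolding coset_lift_def by blast
    then show "x = y" using eq trunc_lift by simp
  qed
  ultimately show "coset_lift h V' p \<phi> b \<in> trunc_inj_cosets h i"
    by (simp add: trunc_inj_cosets_def)
  show "char_trunc h ` coset_lift h V' p \<phi> b = char_coset V' p"
    using trunc_lift by (simp add: coset_lift_def image_image cong: image_cong)
qed

lemma inj_on_coset_lift:
  assumes "czero \<in> V'" "V' \<subseteq> chars h" "p \<in> chars h"
  shows "inj_on (\<lambda>(\<phi>, b). coset_lift h V' p \<phi> b) (linear_forms V' \<times> UNIV)"
proof (rule inj_onI, clarify)
  fix \<phi> b \<psi> c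
  assume \<phi>: "\<phi> \<in> linear_forms V'" and \<psi>: "\<psi> \<in> linear_forms V'"
    and eq: "coset_lift h V' p \<phi> b = coset_lift h V' p \<psi> c"
  have vp: "cadd v p \<in> chars h" if "v \<in> V'" for v using assms that cadd_chars by blast
  have key: "(\<phi> v \<noteq> b) = (\<psi> v \<noteq> c)" if v: "v \<in> V'" for v
  proof -
    have "set_delta h (cadd v p) (\<phi> v \<noteq> b) \<in> coset_lift h V' p \<psi> c"
      using eq v by (auto simp: coset_lift_def)
    then obtain w where w: "w \<in> V'"
      "set_delta h (cadd v p) (\<phi> v \<noteq> b) = set_delta h (cadd w p) (\<psi> w \<noteq> c)"
      by (auto simp: coset_lift_def)
    then have "cadd v p = cadd w p"
      using char_trunc_set_delta[OF vp[OF v]] char_trunc_set_delta[OF vp[OF w(1)]] by metis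
    then show ?thesis using arg_cong[OF w(2), of "\<lambda>n. snd n h"] by simp
  qed
  have "b = c" using key[OF assms(1)] linear_form_czero[OF \<phi> assms(1)] linear_form_czero[OF \<psi> assms(1)]
    by simp
  moreover have "\<phi> = \<psi>"
  proof
    fix x show "\<phi> x = \<psi> x"
      using key[of x] \<open>b = c\<close> \<phi> \<psi> by (cases "x \<in> V'") (auto simp: linear_forms_def)
  qed
  ultimately show "\<phi> = \<psi> \<and> b = c" by simp
qed

lemma trunc_inj_coset_is_lift:
  assumes C: "C \<in> trunc_inj_cosets h i" and trC: "char_trunc h ` C = char_coset V' p"
    and sub: "char_subgroup V'"
  obtains \<phi> b where "\<phi> \<in> linear_forms V'" "C = coset_lift h V' p \<phi> b"
proof -
  obtain V m where V: "isotropic_subspace (Suc h) V" "C = char_coset V m" "\<forall>c\<in>C. \<not> fst c h"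
    using C by (auto simp: trunc_inj_cosets_def elim!: eps_free_cosetsE)
  have subV: "char_subgroup V" using V(1) by (simp add: isotropic_subspace_iff)
  have inj: "inj_on (char_trunc h) C" using C by (simp add: trunc_inj_cosets_def)
  define lift where "lift x = inv_into C (char_trunc h) x" for x
  have lift: "lift x \<in> C" "char_trunc h (lift x) = x" if "x \<in> char_coset V' p" for x
    using that trC unfolding lift_def by (metis inv_into_into, metis f_inv_into_f)
  have lift_trunc: "lift (char_trunc h n) = n" if "n \<in> C" for n
    using inj that by (simp add: lift_def)
  have "czero \<in> V'" using sub by (rule char_subgroupD)
  then have p: "p \<in> char_coset V' p" by (rule coset_base)
  define b where "b = snd (lift p) h"
  define \<phi> where "\<phi> v = (v \<in> V' \<and> (snd (lift (cadd v p)) h \<noteq> b))" for v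
  have "\<phi> \<in> linear_forms V'"
    unfolding linear_forms_def
  proof (intro CollectI conjI ballI allI impI)
    fix v w assume v: "v \<in> V'" and w: "w \<in> V'"
    have vw: "cadd v w \<in> V'" using sub v w by (rule char_subgroupD)
    define q where "q = cadd (lift (cadd v p)) (cadd (lift (cadd w p)) (lift p))"
    \<comment> \<open>a sum of three elements of a coset lies in the coset, so \<open>q\<close> is the lift of \<open>v + w + p\<close>\<close>
    have "cadd (lift (cadd w p)) (lift p) \<in> V"
      using coset_diff[OF subV] lift(1) p w V(2) by blast
    then have "q \<in> C" unfolding q_def using coset_add[OF subV] lift(1) v V(2) by blast
    moreover have "char_trunc h q = cadd (cadd v w) p"
    proof -
      have "char_trunc h (lift (cadd v p)) = cadd v p" "char_trunc h (lift (cadd w p)) = cadd w p"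
        using lift(2) v w by blast+
      then have "char_trunc h q = cadd (cadd v p) (cadd (cadd w p) p)"
        using lift(2)[OF p] by (simp add: q_def char_trunc_cadd)
      also have "\<dots> = cadd (cadd v w) p" by (auto simp: cadd_def fun_eq_iff)
      finally show ?thesis .
    qed
    ultimately have "lift (cadd (cadd v w) p) = q" using lift_trunc by metis
    then show "\<phi> (cadd v w) = (\<phi> v \<noteq> \<phi> w)"
      using v w vw by (auto simp: \<phi>_def b_def q_def snd_cadd)
  qed (simp add: \<phi>_def)
  moreover have "C = coset_lift h V' p \<phi> b"
  proof (intro equalityI subsetI)
    fix n assume n: "n \<in> C"
    then obtain v where v: "v \<in> V'" "char_trunc h n = cadd v p" using trC by blast
    have "\<phi> v \<noteq> b \<longleftrightarrow> snd n h" using v lift_trunc[OF n] by (auto simp: \<phi>_def)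
    then have "n = set_delta h (cadd v p) (\<phi> v \<noteq> b)"
      using set_delta_char_trunc[of n h] V(3) n v(2) by simp
    then show "n \<in> coset_lift h V' p \<phi> b" using v(1) by (auto simp: coset_lift_def)
  next
    fix x assume "x \<in> coset_lift h V' p \<phi> b"
    then obtain v where v: "v \<in> V'" "x = set_delta h (cadd v p) (\<phi> v \<noteq> b)"
      unfolding coset_lift_def by blast
    define a where "a = lift (cadd v p)"
    have a: "a \<in> C" "char_trunc h a = cadd v p" using lift v(1) unfolding a_def by blast+
    have "(\<phi> v \<noteq> b) = snd a h" using v(1) by (auto simp: \<phi>_def a_def)
    then have "x = set_delta h (char_trunc h a) (snd a h)" using v(2) a(2) by simp
    then show "x \<in> C" using set_delta_char_trunc V(3) a(1) by simp
  qed
  ultimately show ?thesis by (rule that)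
qed

lemma card_trunc_inj_fiber:
  assumes C': "C' \<in> even_cosets h i"
  shows "card {C \<in> trunc_inj_cosets h i. char_trunc h ` C = C'} = 2 ^ (i + 1)"
proof -
  obtain V' p where V': "isotropic_subspace h V'" "card V' = 2 ^ i" "p \<in> chars h"
    "C' = char_coset V' p" "\<forall>c\<in>C'. even_char h c"
    using C' by (rule even_cosetsE)
  have sub: "char_subgroup V'" and V'h: "V' \<subseteq> chars h"
    using V'(1) by (simp_all add: isotropic_subspace_iff)
  let ?L = "\<lambda>(\<phi>, b). coset_lift h V' p \<phi> b"
  have fiber: "?L ` (linear_forms V' \<times> UNIV) = {C \<in> trunc_inj_cosets h i. char_trunc h ` C = C'}"
  proof (intro equalityI subsetI)
    fix C assume "C \<in> ?L ` (linear_forms V' \<times> UNIV)"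
    then obtain \<phi> b where "\<phi> \<in> linear_forms V'" "C = coset_lift h V' p \<phi> b" by auto
    then show "C \<in> {C \<in> trunc_inj_cosets h i. char_trunc h ` C = C'}"
      using coset_lift_trunc_inj[OF V'(1-3)] V'(4,5) by simp
  next
    fix C assume "C \<in> {C \<in> trunc_inj_cosets h i. char_trunc h ` C = C'}"
    then have "C \<in> trunc_inj_cosets h i" "char_trunc h ` C = char_coset V' p" using V'(4) by auto
    then obtain \<phi> b where "\<phi> \<in> linear_forms V'" "C = coset_lift h V' p \<phi> b"
      using trunc_inj_coset_is_lift[OF _ _ sub] by blast
    then show "C \<in> ?L ` (linear_forms V' \<times> UNIV)" by (intro image_eqI[of _ _ "(\<phi>, b)"]) auto
  qed
  have "card (?L ` (linear_forms V' \<times> UNIV)) = card (linear_forms V' \<times> (UNIV :: bool set))"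
    by (rule card_image) (rule inj_on_coset_lift[OF char_subgroupD(1)[OF sub] V'h V'(3)])
  then have "card {C \<in> trunc_inj_cosets h i. char_trunc h ` C = C'}
      = card (linear_forms V' \<times> (UNIV :: bool set))"
    by (simp only: fiber)
  also have "\<dots> = 2 ^ (i + 1)"
    using card_linear_forms[OF isotropic_finite[OF V'(1)] sub] V'(2)
    by (simp add: card_cartesian_product)
  finally show ?thesis .
qed

section \<open>The combinatorial identity\<close>

lemma finite_eps_free_cosets: "finite (eps_free_cosets h i)"
  using finite_even_cosets by (simp add: eps_free_cosets_def)

lemma sum_even_cosets_eps_free:
  fixes f :: "char \<Rightarrow> 'a::comm_semiring_1"
  assumes "0 < s"
  shows "(\<Sum>C\<in>even_cosets (Suc h) i. (\<Prod>n\<in>C. if fst n h then 0 else f (char_trunc h n)) ^ s)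
       = (\<Sum>C\<in>eps_free_cosets h i. (\<Prod>n\<in>C. f (char_trunc h n)) ^ s)"
proof (rule sum.mono_neutral_cong_right)
  show "\<forall>C\<in>even_cosets (Suc h) i - eps_free_cosets h i.
      (\<Prod>n\<in>C. if fst n h then 0 else f (char_trunc h n)) ^ s = 0"
  proof
    fix C assume C: "C \<in> even_cosets (Suc h) i - eps_free_cosets h i"
    then have "finite C" "\<exists>n\<in>C. fst n h" using finite_even_coset by (auto simp: eps_free_cosets_def)
    then have "(\<Prod>n\<in>C. if fst n h then 0 else f (char_trunc h n)) = 0" by (intro prod_zero) auto
    then show "(\<Prod>n\<in>C. if fst n h then 0 else f (char_trunc h n)) ^ s = 0"
      using assms by (simp add: power_0_left)
  qed
  show "(\<Prod>n\<in>C. if fst n h then 0 else f (char_trunc h n)) ^ s = (\<Prod>n\<in>C. f (char_trunc h n)) ^ s"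
    if "C \<in> eps_free_cosets h i" for C
    using that by (auto simp: eps_free_cosets_def intro!: prod.cong)
qed (auto simp: eps_free_cosets_def finite_even_cosets)

lemma sum_trunc_inj_cosets:
  fixes f :: "char \<Rightarrow> 'a::comm_semiring_1"
  shows "(\<Sum>C\<in>trunc_inj_cosets h i. (\<Prod>n\<in>C. f (char_trunc h n)) ^ s)
       = 2 ^ (i + 1) * (\<Sum>C\<in>even_cosets h i. (\<Prod>n\<in>C. f n) ^ s)"
proof -
  let ?P = "\<lambda>C. (\<Prod>n\<in>C. f n) ^ s"
  have "(\<Sum>C\<in>trunc_inj_cosets h i. (\<Prod>n\<in>C. f (char_trunc h n)) ^ s)
      = (\<Sum>C\<in>trunc_inj_cosets h i. ?P (char_trunc h ` C))"
    by (rule sum.cong) (auto simp: trunc_inj_cosets_def prod.reindex)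
  also have "\<dots> = (\<Sum>C'\<in>even_cosets h i.
      \<Sum>C\<in>{C \<in> trunc_inj_cosets h i. char_trunc h ` C = C'}. ?P (char_trunc h ` C))"
    using finite_eps_free_cosets trunc_inj_coset_image
    by (intro sum.group[symmetric]) (auto simp: trunc_inj_cosets_def finite_even_cosets)
  also have "\<dots> = (\<Sum>C'\<in>even_cosets h i. 2 ^ (i + 1) * ?P C')"
  proof (rule sum.cong)
    fix C' assume "C' \<in> even_cosets h i"
    have "(\<Sum>C\<in>{C \<in> trunc_inj_cosets h i. char_trunc h ` C = C'}. ?P (char_trunc h ` C))
        = (\<Sum>C\<in>{C \<in> trunc_inj_cosets h i. char_trunc h ` C = C'}. ?P C')"
      by (rule sum.cong) auto
    then show "(\<Sum>C\<in>{C \<in> trunc_inj_cosets h i. char_trunc h ` C = C'}. ?P (char_trunc h ` C))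
        = 2 ^ (i + 1) * ?P C'"
      using card_trunc_inj_fiber[OF \<open>C' \<in> even_cosets h i\<close>] by simp
  qed simp
  finally show ?thesis by (simp add: sum_distrib_left)
qed

lemma sum_trunc_noninj_cosets:
  fixes f :: "char \<Rightarrow> 'a::comm_semiring_1"
  shows "(\<Sum>C\<in>trunc_noninj_cosets h i. (\<Prod>n\<in>C. f (char_trunc h n)) ^ s)
       = (if i = 0 then 0 else (\<Sum>C\<in>even_cosets h (i - 1). (\<Prod>n\<in>C. f n) ^ (2 * s)))"
proof (cases "i = 0")
  case True
  then have "trunc_noninj_cosets h i = {}" using trunc_noninj_cosetD(1) by blast
  then show ?thesis using True by simp
next
  case False
  have "(\<Sum>C\<in>trunc_noninj_cosets h i. (\<Prod>n\<in>C. f (char_trunc h n)) ^ s)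
      = (\<Sum>C\<in>trunc_noninj_cosets h i. (\<Prod>n\<in>char_trunc h ` C. f n) ^ (2 * s))"
    by (rule sum.cong) (simp_all add: prod_noninj_coset power_mult)
  also have "\<dots> = (\<Sum>C\<in>even_cosets h (i - 1). (\<Prod>n\<in>C. f n) ^ (2 * s))"
    using trunc_noninj_cosets_bij[of i h] False
    by (intro sum.reindex_bij_betw) simp
  finally show ?thesis using False by simp
qed

lemma sum_even_cosets_Suc:
  fixes f :: "char \<Rightarrow> 'a::comm_semiring_1"
  assumes "0 < s"
  shows "(\<Sum>C\<in>even_cosets (Suc h) i. (\<Prod>n\<in>C. if fst n h then 0 else f (char_trunc h n)) ^ s)
       = 2 ^ (i + 1) * (\<Sum>C\<in>even_cosets h i. (\<Prod>n\<in>C. f n) ^ s)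
         + (if i = 0 then 0 else (\<Sum>C\<in>even_cosets h (i - 1). (\<Prod>n\<in>C. f n) ^ (2 * s)))"
proof -
  have "eps_free_cosets h i = trunc_inj_cosets h i \<union> trunc_noninj_cosets h i"
    "trunc_inj_cosets h i \<inter> trunc_noninj_cosets h i = {}"
    by (auto simp: trunc_inj_cosets_def trunc_noninj_cosets_def)
  moreover have "finite (trunc_inj_cosets h i)" "finite (trunc_noninj_cosets h i)"
    using finite_eps_free_cosets by (auto simp: trunc_inj_cosets_def trunc_noninj_cosets_def)
  ultimately show ?thesis
    by (simp add: sum_even_cosets_eps_free[OF assms] sum.union_disjoint
        sum_trunc_inj_cosets sum_trunc_noninj_cosets)
qed

section \<open>Theta functions of genus one\<close>

text \<open>\<open>theta1 \<epsilon> \<delta> t\<close> is the genus-one \<open>\<theta>\<^sub>[\<^sub>\<epsilon>\<^sub>,\<^sub>\<delta>\<^sub>](i t)\<close>, written in the shape of the factor that the last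
  coordinate contributes to the summand of \<open>theta\<close>.\<close>

definition theta1_term :: "bool \<Rightarrow> bool \<Rightarrow> real \<Rightarrow> int \<Rightarrow> complex" where
  "theta1_term e d t k = (let y = real_of_int k + (if e then 1/2 else 0) in
     exp (complex_of_real pi * \<i> * (complex_of_real y * (\<i> * complex_of_real t) * complex_of_real y
        + complex_of_real (y * (if d then 1 else 0)))))"

definition theta1 :: "bool \<Rightarrow> bool \<Rightarrow> real \<Rightarrow> complex" where
  "theta1 e d t = infsum (theta1_term e d t) UNIV"

lemma norm_theta1_term:
  "norm (theta1_term e d t k) = exp (- (pi * t * (real_of_int k + (if e then 1/2 else 0))\<^sup>2))"
proof -
  define y where "y = real_of_int k + (if e then 1/2 else 0)"
  have "complex_of_real pi * \<i> * (complex_of_real y * (\<i> * complex_of_real t) * complex_of_real y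
        + complex_of_real (y * (if d then 1 else 0)))
      = complex_of_real (- (pi * t * y\<^sup>2)) + \<i> * complex_of_real (pi * y * (if d then 1 else 0))"
    by (simp add: algebra_simps power2_eq_square)
  then show ?thesis by (simp add: theta1_term_def y_def[symmetric] Let_def norm_exp_eq_Re)
qed

lemma theta1_term_0 [simp]: "theta1_term False d t 0 = 1"
  by (simp add: theta1_term_def)

lemma gaussian_exponent_bound:
  fixes t y r :: real
  assumes "1 \<le> t" "1/2 \<le> \<bar>y\<bar>" "r - 1/2 \<le> \<bar>y\<bar>"
  shows "t / 4 + r - 1 \<le> pi * t * y\<^sup>2"
proof -
  have "0 \<le> (\<bar>y\<bar> - 1/2)\<^sup>2" by simp
  then have "\<bar>y\<bar> - 1/2 \<le> y\<^sup>2 - 1/4" by (simp add: power2_eq_square algebra_simps)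
  moreover have "1/4 \<le> y\<^sup>2"
    using power_mono[OF assms(2), of 2] by (simp add: power_divide)
  then have "y\<^sup>2 - 1/4 \<le> t * (y\<^sup>2 - 1/4)" using assms(1) by (simp add: mult_le_cancel_right1)
  moreover have "t * y\<^sup>2 \<le> pi * t * y\<^sup>2" using assms(1) pi_gt3 by (intro mult_right_mono) auto
  ultimately show ?thesis using assms(3) by (simp add: algebra_simps)
qed

lemma norm_theta1_term_le:
  assumes "1 \<le> t" "e \<or> k \<noteq> 0"
  shows "norm (theta1_term e d t k) \<le> exp (1 - t / 4) * exp (- real_of_int \<bar>k\<bar>)"
proof -
  define y where "y = real_of_int k + (if e then 1/2 else 0)"
  have "1/2 \<le> \<bar>y\<bar>" "real_of_int \<bar>k\<bar> - 1/2 \<le> \<bar>y\<bar>"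
    using assms(2) unfolding y_def by (cases "0 \<le> k"; cases e; simp; linarith)+
  then have "t / 4 + real_of_int \<bar>k\<bar> - 1 \<le> pi * t * y\<^sup>2"
    by (intro gaussian_exponent_bound assms(1))
  then have "norm (theta1_term e d t k) \<le> exp (1 - t / 4 - real_of_int \<bar>k\<bar>)"
    by (simp add: norm_theta1_term flip: y_def)
  also have "exp (1 - t / 4 - real_of_int \<bar>k\<bar>) = exp (1 - t / 4) * exp (- real_of_int \<bar>k\<bar>)"
    by (simp add: mult_exp_exp)
  finally show ?thesis .
qed

lemma summable_exp_neg_abs_int: "(\<lambda>k::int. exp (- real_of_int \<bar>k\<bar>)) summable_on UNIV"
proof -
  have "(\<lambda>n::nat. exp (- real n)) summable_on UNIV"
  proof (rule summable_nonneg_imp_summable_on)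
    have "(\<lambda>n::nat. exp (- real n)) = (\<lambda>n. exp (-1) ^ n)"
      by (simp add: exp_of_nat_mult[symmetric])
    then show "summable (\<lambda>n::nat. exp (- real n))" by (simp add: summable_geometric)
  qed simp
  then have "(\<lambda>k::int. exp (- real_of_int \<bar>k\<bar>)) summable_on range int"
    "(\<lambda>k::int. exp (- real_of_int \<bar>k\<bar>)) summable_on range (\<lambda>n. - int n)"
    by (subst summable_on_reindex; force simp: o_def intro: inj_onI)+
  moreover have "x \<in> range int \<union> range (\<lambda>n. - int n)" for x :: int
  proof (cases "0 \<le> x")
    case False
    then have "x = - int (nat (- x))" by simp
    then show ?thesis by blast
  qed (metis UnI1 nonneg_int_cases rangeI)
  then have "UNIV = range int \<union> range (\<lambda>n. - int n)" by blast
  ultimately show ?thesis by (metis summable_on_union)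
qed

lemma theta1_term_summable:
  assumes "1 \<le> t"
  shows "theta1_term e d t summable_on A"
proof -
  have "(\<lambda>k. exp (1 - t / 4) * exp (- real_of_int \<bar>k\<bar>)) summable_on UNIV - {0}"
    using summable_on_cmult_right[OF summable_exp_neg_abs_int] summable_on_subset_banach by blast
  then have "(\<lambda>k. norm (theta1_term e d t k)) summable_on UNIV - {0}"
    by (rule summable_on_comparison_test) (use norm_theta1_term_le[OF assms] in auto)
  then have "theta1_term e d t summable_on UNIV - {0}"
    using summable_on_iff_abs_summable_on_complex by blast
  then have "theta1_term e d t summable_on UNIV"
    using summable_on_insert_iff[of "theta1_term e d t" 0 "UNIV - {0}"] by (simp add: insert_absorb)
  then show ?thesis using summable_on_subset_banach by blast
qed

text \<open>All terms except \<open>k = 0\<close> for \<open>\<epsilon> = 0\<close> decay like \<open>e\<^sup>-\<^sup>t\<^sup>/\<^sup>4\<close>, uniformly in \<open>k\<close>.\<close>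

lemma theta1_tendsto: "((\<lambda>t. theta1 e d t) \<longlongrightarrow> (if e then 0 else 1)) at_top"
proof -
  define S where "S = {k :: int. e \<or> k \<noteq> 0}"
  define M where "M = infsum (\<lambda>k::int. exp (- real_of_int \<bar>k\<bar>)) S"
  have M: "((\<lambda>k::int. exp (- real_of_int \<bar>k\<bar>)) has_sum M) S"
    unfolding M_def using summable_on_subset_banach[OF summable_exp_neg_abs_int] by auto
  have bound: "norm (theta1 e d t - (if e then 0 else 1)) \<le> exp (1 - t / 4) * M" if t: "1 \<le> t" for t
  proof -
    have "theta1 e d t = (if e then 0 else 1) + infsum (theta1_term e d t) S"
    proof (cases e)
      case False
      then have "UNIV = insert 0 S" by (auto simp: S_def)
      then show ?thesis
        using infsum_insert[OF theta1_term_summable[OF t], of 0 S] False by (simp add: theta1_def S_def)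
    qed (simp add: theta1_def S_def)
    moreover have "norm (infsum (theta1_term e d t) S) \<le> exp (1 - t / 4) * M"
    proof (rule norm_infsum_le[OF _ has_sum_cmult_right[OF M]])
      show "(theta1_term e d t has_sum infsum (theta1_term e d t) S) S"
        using theta1_term_summable[OF t] by (rule has_sum_infsum)
    qed (use norm_theta1_term_le[OF t] in \<open>auto simp: S_def\<close>)
    ultimately show ?thesis by simp
  qed
  have "((\<lambda>t::real. exp (1 - t / 4) * M) \<longlongrightarrow> 0) at_top"
    by (intro tendsto_mult_left_zero) real_asymp
  then have "((\<lambda>t. theta1 e d t - (if e then 0 else 1)) \<longlongrightarrow> 0) at_top"
  proof (rule Lim_null_comparison[rotated])
    show "\<forall>\<^sub>F t in at_top. norm (theta1 e d t - (if e then 0 else 1)) \<le> exp (1 - t / 4) * M"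
      using eventually_ge_at_top[of "1::real"] by eventually_elim (rule bound)
  qed
  then show ?thesis by (simp add: LIM_zero_iff)
qed

section \<open>Splitting theta along the last coordinate\<close>

lemma summable_on_product:
  fixes f :: "'a \<Rightarrow> complex" and g :: "'b \<Rightarrow> complex"
  assumes "f summable_on A" "g summable_on B"
  shows "(\<lambda>(a, b). f a * g b) summable_on A \<times> B"
proof -
  have af: "(\<lambda>x. norm (f x)) summable_on A" and ag: "(\<lambda>x. norm (g x)) summable_on B"
    using assms summable_on_iff_abs_summable_on_complex by blast+
  let ?n = "\<lambda>(a, b). norm (f a) * norm (g b)"
  have "(\<lambda>p. norm (?n p)) summable_on Sigma A (\<lambda>_. B)"
  proof (rule Infinite_Sum.abs_summable_on_Sigma_iff[where f = "\<lambda>(a, b). norm (f a) * norm (g b)" and A = A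
        and B = "\<lambda>_. B", THEN iffD2], intro conjI ballI)
    fix x assume "x \<in> A"
    show "(\<lambda>y. norm (?n (x, y))) summable_on B"
      using summable_on_cmult_right[OF ag, of "norm (f x)"] by simp
  next
    have "(\<Sum>\<^sub>\<infinity>y\<in>B. norm (?n (x, y))) = norm (f x) * (\<Sum>\<^sub>\<infinity>y\<in>B. norm (g y))" for x
      by (simp add: infsum_cmult_right')
    moreover have "0 \<le> (\<Sum>\<^sub>\<infinity>y\<in>B. norm (g y))" by (rule infsum_nonneg) simp
    ultimately show "(\<lambda>x. norm (\<Sum>\<^sub>\<infinity>y\<in>B. norm (?n (x, y)))) summable_on A"
      using summable_on_cmult_left[OF af, of "\<Sum>\<^sub>\<infinity>y\<in>B. norm (g y)"] by (simp add: abs_mult)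
  qed
  then have "(\<lambda>p. norm ((\<lambda>(a, b). f a * g b) p)) summable_on A \<times> B"
    by (simp add: case_prod_unfold norm_mult)
  then show ?thesis using summable_on_iff_abs_summable_on_complex by blast
qed

lemma summable_on_product_factors:
  fixes f :: "'a \<Rightarrow> complex" and g :: "'b \<Rightarrow> complex"
  assumes S: "(\<lambda>(a, b). f a * g b) summable_on A \<times> B"
    and a0: "a0 \<in> A" "f a0 \<noteq> 0" and b0: "b0 \<in> B" "g b0 \<noteq> 0"
  shows "f summable_on A" and "g summable_on B"
proof -
  have "(\<lambda>(a, b). f a * g b) summable_on (\<lambda>a. (a, b0)) ` A"
    by (rule summable_on_subset_banach[OF S]) (use b0 in auto)
  then have "(\<lambda>a. f a * g b0) summable_on A"
    by (subst (asm) summable_on_reindex) (auto intro: inj_onI simp: o_def)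
  then show "f summable_on A" using summable_on_cmult_left'[OF b0(2)] by blast
  have "(\<lambda>(a, b). f a * g b) summable_on (\<lambda>b. (a0, b)) ` B"
    by (rule summable_on_subset_banach[OF S]) (use a0 in auto)
  then have "(\<lambda>b. f a0 * g b) summable_on B"
    by (subst (asm) summable_on_reindex) (auto intro: inj_onI simp: o_def)
  then show "g summable_on B" using summable_on_cmult_right'[OF a0(2)] by blast
qed

text \<open>No summability is assumed: both sides are junk \<open>0\<close> unless both factors are summable
  or one of them vanishes identically.\<close>

lemma infsum_product:
  fixes f :: "'a \<Rightarrow> complex" and g :: "'b \<Rightarrow> complex"
  shows "infsum (\<lambda>(a, b). f a * g b) (A \<times> B) = infsum f A * infsum g B"
proof (cases "f summable_on A \<and> g summable_on B")
  case True
  then have "(\<lambda>(a, b). f a * g b) summable_on A \<times> B" using summable_on_product by blast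
  then have "infsum (\<lambda>(a, b). f a * g b) (A \<times> B) = infsum (\<lambda>x. infsum (\<lambda>y. f x * g y) B) A"
    using infsum_Sigma_banach[of "\<lambda>(a, b). f a * g b" A "\<lambda>_. B"] by simp
  also have "\<dots> = infsum (\<lambda>x. f x * infsum g B) A" by (simp add: infsum_cmult_right')
  also have "\<dots> = infsum f A * infsum g B" by (simp add: infsum_cmult_left')
  finally show ?thesis .
next
  case False
  show ?thesis
  proof (cases "(\<exists>a\<in>A. f a \<noteq> 0) \<and> (\<exists>b\<in>B. g b \<noteq> 0)")
    case True
    then obtain a0 b0 where "a0 \<in> A" "f a0 \<noteq> 0" "b0 \<in> B" "g b0 \<noteq> 0" by blast
    then have "\<not> (\<lambda>(a, b). f a * g b) summable_on A \<times> B"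
      using \<open>\<not> (f summable_on A \<and> g summable_on B)\<close> summable_on_product_factors by metis
    moreover have "infsum f A = 0 \<or> infsum g B = 0"
      using \<open>\<not> (f summable_on A \<and> g summable_on B)\<close> by (auto simp: infsum_not_exists)
    ultimately show ?thesis by (auto simp: infsum_not_exists)
  next
    case False
    then have "(\<forall>a\<in>A. f a = 0) \<or> (\<forall>b\<in>B. g b = 0)" by blast
    then have "infsum (\<lambda>(a, b). f a * g b) (A \<times> B) = 0 \<and> (infsum f A = 0 \<or> infsum g B = 0)"
      by (auto intro!: infsum_0)
    then show ?thesis by auto
  qed
qed

lemma quad_form_blk:
  fixes X :: "nat \<Rightarrow> complex"
  shows "(\<Sum>j<Suc h. \<Sum>l<Suc h. X j * blk (Suc h) \<tau>1 t j l * X l)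
       = (\<Sum>j<h. \<Sum>l<h. X j * \<tau>1 j l * X l) + X h * (\<i> * complex_of_real t) * X h"
proof -
  have inner: "(\<Sum>l<Suc h. X j * blk (Suc h) \<tau>1 t j l * X l) = (\<Sum>l<h. X j * \<tau>1 j l * X l)" if "j < h" for j
  proof -
    have "(\<Sum>l<Suc h. X j * blk (Suc h) \<tau>1 t j l * X l)
        = (\<Sum>l<h. X j * blk (Suc h) \<tau>1 t j l * X l) + X j * blk (Suc h) \<tau>1 t j h * X h"
      by simp
    also have "blk (Suc h) \<tau>1 t j h = 0" using that by (simp add: blk_def)
    also have "(\<Sum>l<h. X j * blk (Suc h) \<tau>1 t j l * X l) = (\<Sum>l<h. X j * \<tau>1 j l * X l)"
      by (rule sum.cong) (use that in \<open>simp_all add: blk_def\<close>)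
    finally show ?thesis by simp
  qed
  have innerh: "(\<Sum>l<Suc h. X h * blk (Suc h) \<tau>1 t h l * X l) = X h * (\<i> * complex_of_real t) * X h"
  proof -
    have "(\<Sum>l<Suc h. X h * blk (Suc h) \<tau>1 t h l * X l)
        = (\<Sum>l<h. X h * blk (Suc h) \<tau>1 t h l * X l) + X h * blk (Suc h) \<tau>1 t h h * X h"
      by simp
    also have "(\<Sum>l<h. X h * blk (Suc h) \<tau>1 t h l * X l) = 0"
      by (rule sum.neutral) (simp add: blk_def)
    also have "blk (Suc h) \<tau>1 t h h = \<i> * complex_of_real t" by (simp add: blk_def)
    finally show ?thesis by simp
  qed
  have "(\<Sum>j<Suc h. \<Sum>l<Suc h. X j * blk (Suc h) \<tau>1 t j l * X l)
      = (\<Sum>j<h. \<Sum>l<Suc h. X j * blk (Suc h) \<tau>1 t j l * X l) + (\<Sum>l<Suc h. X h * blk (Suc h) \<tau>1 t h l * X l)"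
    by simp
  also have "(\<Sum>j<h. \<Sum>l<Suc h. X j * blk (Suc h) \<tau>1 t j l * X l) = (\<Sum>j<h. \<Sum>l<h. X j * \<tau>1 j l * X l)"
    by (rule sum.cong[OF refl]) (rule inner, simp)
  finally show ?thesis using innerh by simp
qed

definition theta_summand :: "nat \<Rightarrow> char \<Rightarrow> cmat \<Rightarrow> (nat \<Rightarrow> int) \<Rightarrow> complex" where
  "theta_summand g m \<tau> n = (let x = (\<lambda>j. of_int (n j) + (if fst m j then 1/2 else 0) :: real) in
      exp (complex_of_real pi * \<i> *
        ((\<Sum>j<g. \<Sum>k<g. complex_of_real (x j) * \<tau> j k * complex_of_real (x k))
         + (\<Sum>j<g. complex_of_real (x j * (if snd m j then 1 else 0))))))"

lemma theta_eq_infsum: "theta g m \<tau> = infsum (theta_summand g m \<tau>) (Zg g)"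
  unfolding theta_def theta_summand_def ..

lemma theta_summand_split:
  "theta_summand (Suc h) m (blk (Suc h) \<tau>1 t) (a(h := k))
     = theta_summand h (char_trunc h m) \<tau>1 a * theta1_term (fst m h) (snd m h) t k"
proof -
  define x where "x = (\<lambda>j. of_int ((a(h := k)) j) + (if fst m j then 1/2 else 0) :: real)"
  define x' where "x' = (\<lambda>j. of_int (a j) + (if fst (char_trunc h m) j then 1/2 else 0) :: real)"
  define y where "y = real_of_int k + (if fst m h then 1/2 else 0)"
  have xe: "x j = x' j" if "j < h" for j using that by (simp add: x_def x'_def char_trunc_def)
  have xh: "x h = y" by (simp add: x_def y_def)
  define Q' where "Q' = (\<Sum>j<h. \<Sum>l<h. complex_of_real (x' j) * \<tau>1 j l * complex_of_real (x' l))"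
  define L' where "L' = (\<Sum>j<h. complex_of_real (x' j * (if snd (char_trunc h m) j then 1 else 0)))"
  define q where "q = complex_of_real y * (\<i> * complex_of_real t) * complex_of_real y"
  define l where "l = complex_of_real (y * (if snd m h then 1 else 0))"
  have Q: "(\<Sum>j<Suc h. \<Sum>l<Suc h. complex_of_real (x j) * blk (Suc h) \<tau>1 t j l * complex_of_real (x l)) = Q' + q"
  proof -
    have "(\<Sum>j<Suc h. \<Sum>l<Suc h. complex_of_real (x j) * blk (Suc h) \<tau>1 t j l * complex_of_real (x l))
        = (\<Sum>j<h. \<Sum>l<h. complex_of_real (x j) * \<tau>1 j l * complex_of_real (x l))
          + complex_of_real (x h) * (\<i> * complex_of_real t) * complex_of_real (x h)"
      by (rule quad_form_blk)
    also have "complex_of_real (x h) * (\<i> * complex_of_real t) * complex_of_real (x h) = q"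
      using xh by (simp add: q_def)
    also have "(\<Sum>j<h. \<Sum>l<h. complex_of_real (x j) * \<tau>1 j l * complex_of_real (x l)) = Q'"
      unfolding Q'_def by (intro sum.cong refl) (simp add: xe)
    finally show ?thesis .
  qed
  have L: "(\<Sum>j<Suc h. complex_of_real (x j * (if snd m j then 1 else 0))) = L' + l"
  proof -
    have "(\<Sum>j<Suc h. complex_of_real (x j * (if snd m j then 1 else 0)))
        = (\<Sum>j<h. complex_of_real (x j * (if snd m j then 1 else 0))) + l"
      by (simp add: l_def xh)
    also have "(\<Sum>j<h. complex_of_real (x j * (if snd m j then 1 else 0))) = L'"
      unfolding L'_def by (intro sum.cong refl) (simp add: xe char_trunc_def)
    finally show ?thesis .
  qed
  have "theta_summand (Suc h) m (blk (Suc h) \<tau>1 t) (a(h := k)) = exp (complex_of_real pi * \<i> * ((Q' + q) + (L' + l)))"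
    unfolding theta_summand_def Let_def x_def[symmetric] using Q L by simp
  also have "complex_of_real pi * \<i> * ((Q' + q) + (L' + l))
      = complex_of_real pi * \<i> * (Q' + L') + complex_of_real pi * \<i> * (q + l)"
    by (simp add: algebra_simps)
  also have "exp \<dots> = exp (complex_of_real pi * \<i> * (Q' + L')) * exp (complex_of_real pi * \<i> * (q + l))"
    by (rule exp_add)
  also have "exp (complex_of_real pi * \<i> * (Q' + L')) = theta_summand h (char_trunc h m) \<tau>1 a"
    unfolding theta_summand_def Let_def x'_def[symmetric] Q'_def L'_def ..
  also have "exp (complex_of_real pi * \<i> * (q + l)) = theta1_term (fst m h) (snd m h) t k"
    unfolding theta1_term_def Let_def y_def[symmetric] q_def l_def ..
  finally show ?thesis .
qed

lemma theta_blk: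
  "theta (Suc h) m (blk (Suc h) \<tau>1 t) = theta h (char_trunc h m) \<tau>1 * theta1 (fst m h) (snd m h) t"
proof -
  define \<beta> where "\<beta> p = (fst p)(h := snd p)" for p :: "(nat \<Rightarrow> int) \<times> int"
  have bij: "bij_betw \<beta> (Zg h \<times> UNIV) (Zg (Suc h))"
  proof (rule bij_betw_byWitness[where f'="\<lambda>n. (n(h := 0), n h)"])
    show "\<forall>p\<in>Zg h \<times> UNIV. ((\<beta> p)(h := 0), \<beta> p h) = p"
    proof
      fix p assume p: "p \<in> Zg h \<times> (UNIV :: int set)"
      then have "fst p h = 0" by (cases p) (simp add: Zg_def)
      then have "(\<beta> p)(h := 0) = fst p" by (auto simp: \<beta>_def fun_eq_iff)
      then show "((\<beta> p)(h := 0), \<beta> p h) = p" by (cases p) (simp add: \<beta>_def)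
    qed
    show "\<forall>n\<in>Zg (Suc h). \<beta> (n(h := 0), n h) = n" by (simp add: \<beta>_def)
    show "\<beta> ` (Zg h \<times> UNIV) \<subseteq> Zg (Suc h)" by (auto simp: \<beta>_def Zg_def)
    show "(\<lambda>n. (n(h := 0), n h)) ` Zg (Suc h) \<subseteq> Zg h \<times> UNIV"
      by (auto simp: Zg_def)
  qed
  have "theta (Suc h) m (blk (Suc h) \<tau>1 t) = infsum (theta_summand (Suc h) m (blk (Suc h) \<tau>1 t)) (Zg (Suc h))"
    by (rule theta_eq_infsum)
  also have "\<dots> = infsum (\<lambda>p. theta_summand (Suc h) m (blk (Suc h) \<tau>1 t) (\<beta> p)) (Zg h \<times> UNIV)"
    by (rule infsum_reindex_bij_betw[OF bij, symmetric])
  also have "\<dots> = infsum (\<lambda>(a, k). theta_summand h (char_trunc h m) \<tau>1 a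
      * theta1_term (fst m h) (snd m h) t k) (Zg h \<times> UNIV)"
    by (rule infsum_cong) (auto simp: \<beta>_def theta_summand_split)
  also have "\<dots> = infsum (theta_summand h (char_trunc h m) \<tau>1) (Zg h) * infsum (theta1_term (fst m h) (snd m h) t) UNIV"
    by (rule infsum_product)
  finally show ?thesis by (simp add: theta_eq_infsum theta1_def)
qed

section \<open>The Siegel operator on the theta sums\<close>

lemma siegel_Phi_Ssum:
  assumes "0 < s"
  shows "siegel_Phi_eq (Suc h) (Ssum (Suc h) i s)
     (\<lambda>\<tau>. 2 ^ (i + 1) * Ssum h i s \<tau> + (if i = 0 then 0 else Ssum h (i - 1) (2 * s) \<tau>))"
  unfolding siegel_Phi_eq_def
proof (intro ballI)
  fix \<tau>1 :: cmat
  let ?E = "even_cosets (Suc h) i"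
  have "((\<lambda>t. \<Sum>C\<in>?E. (\<Prod>n\<in>C. theta h (char_trunc h n) \<tau>1 * theta1 (fst n h) (snd n h) t) ^ s)
      \<longlongrightarrow> (\<Sum>C\<in>?E. (\<Prod>n\<in>C. theta h (char_trunc h n) \<tau>1 * (if fst n h then 0 else 1)) ^ s)) at_top"
    by (intro tendsto_sum tendsto_power tendsto_prod tendsto_mult tendsto_const theta1_tendsto)
  also have "(\<Sum>C\<in>?E. (\<Prod>n\<in>C. theta h (char_trunc h n) \<tau>1 * (if fst n h then 0 else 1)) ^ s)
      = (\<Sum>C\<in>?E. (\<Prod>n\<in>C. if fst n h then 0 else theta h (char_trunc h n) \<tau>1) ^ s)"
    by (intro sum.cong refl arg_cong[where f = "\<lambda>x. x ^ s"] prod.cong) auto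
  also have "\<dots> = 2 ^ (i + 1) * Ssum h i s \<tau>1 + (if i = 0 then 0 else Ssum h (i - 1) (2 * s) \<tau>1)"
    unfolding Ssum_def by (rule sum_even_cosets_Suc[OF assms])
  finally show "((\<lambda>t. Ssum (Suc h) i s (blk (Suc h) \<tau>1 t)) \<longlongrightarrow>
      2 ^ (i + 1) * Ssum h i s \<tau>1 + (if i = 0 then 0 else Ssum h (i - 1) (2 * s) \<tau>1)) at_top"
    by (simp only: Ssum_def theta_blk)
qed

theorem mainTheorem6:
  fixes g i s :: nat
  assumes "1 \<le> g" and "i \<le> g" and "0 < s" and "(16::nat) dvd 2 ^ i * s"
  shows "(0 < i \<and> i < g \<longrightarrow> siegel_Phi_eq g (Ssum g i s)
            (\<lambda>\<tau>. 2 ^ (i + 1) * Ssum (g - 1) i s \<tau> + Ssum (g - 1) (i - 1) (2 * s) \<tau>))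
       \<and> (i = g \<longrightarrow> siegel_Phi_eq g (Ssum g g s) (Ssum (g - 1) (g - 1) (2 * s)))
       \<and> (i = 0 \<longrightarrow> siegel_Phi_eq g (Ssum g 0 s) (\<lambda>\<tau>. 2 * Ssum (g - 1) 0 s \<tau>))"
proof -
  \<comment> \<open>the divisibility hypothesis makes the \<open>S\<close> modular; the limits hold for every \<open>s > 0\<close>\<close>
  obtain h where g: "g = Suc h" using assms(1) by (cases g) auto
  note Phi = siegel_Phi_Ssum[OF assms(3), of h]
  have "Ssum h (Suc h) s = (\<lambda>_. 0)" by (simp add: Ssum_def even_cosets_empty fun_eq_iff)
  then have "siegel_Phi_eq g (Ssum g g s) (Ssum (g - 1) (g - 1) (2 * s))"
    using Phi[of g] g by simp
  moreover have "siegel_Phi_eq g (Ssum g i s)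
      (\<lambda>\<tau>. 2 ^ (i + 1) * Ssum (g - 1) i s \<tau> + Ssum (g - 1) (i - 1) (2 * s) \<tau>)" if "0 < i"
    using Phi[of i] g that by simp
  moreover have "siegel_Phi_eq g (Ssum g 0 s) (\<lambda>\<tau>. 2 * Ssum (g - 1) 0 s \<tau>)"
    using Phi[of 0] g by simp
  ultimately show ?thesis by blast
qed

end
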